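(* Let $\tau$ be a tuple of positive integers, $0\le k\le\ell$, and $\hat P_\tau=C\sqcup O$ the $k$-decomposition. Let $F$ be a nonempty face of $\mathcal{O}_{C,O}(\tau)$ such that none of the nonnegativity inequalities $x_p\ge0$ ($p\in C$) and none of the chain inequalities holds with equality at every point of $F$ (i.e. $F$ is cut out by order inequalities only). Let $\varphi$ be the partition of $O$ associated with $F$ and $\pi=\varphi\cup\{\{c\}:c\in C\}$. Then $\pi$ is compatible, so the quotient poset $\hat P_\tau/\pi$ is defined; its minimum is $\{\hat0\}$ and its maximum is the block $T\in\varphi$ containing $\hat1$. Let $C_\pi=\{\{c\}:c\in C\}$, and let $\mathcal{O}_{C_\pi,\varphi}(\hat P_\tau/\pi)\subseteq\mathbb{R}^{\pi}$ be the set of $(x_B)_{B\in\pi}$ with $x_{\{\hat0\}}=0$, $x_T=1$, $x_B\ge 0$ for $B\in C_\pi$, $x_B\le x_{B'}$ for all $B,B'\in\varphi$ with $B$ covered by $B'$ in $\hat P_\tau/\pi$, and $x_{B_1}+\dots+x_{B_r}\le x_A$ for every saturated chain $\{\hat0\}\prec B_1\prec\dots\prec B_r\prec A$ in $\hat P_\tau/\pi$ with $B_1,\dots,B_r\in C_\pi$, $A\in\varphi$, $r\ge0$. Then the map $$\mathcal{O}_{C_\pi,\varphi}(\hat P_\tau/\pi)\to F,\quad (x_B)_{B\in\pi}\mapsto (x_{q(p)})_{p\in\hat P_\tau}$$ is an affine isomorphism, where $q:\hat P_\tau\to\hat P_\tau/\pi$ sends $p$ to its block. In particular the codimension of $F$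 equals $|O|-|\varphi|$.
   Context: Let $\tau=(\tau_1,\dots,\tau_\ell)$ be positive integers, $|\tau|=\sum_i\tau_i$. The poset $P_\tau$ has elements $y^i_j$ ($1\le i\le\ell$, $1\le j\le\tau_i$) with $y^i_j<y^{i'}_{j'}$ iff $i<i'$; $Y^i=\{y^i_1,\dots,y^i_{\tau_i}\}$. $\hat P_\tau=P_\tau\cup\{\hat0,\hat1\}$ with new minimum $\hat0$ and maximum $\hat1$, $Y^0=\{\hat0\}$, $Y^{\ell+1}=\{\hat1\}$; $\prec$ is the covering relation. The $k$-decomposition is $C=Y^0\cup\dots\cup Y^k$, $O=Y^{k+1}\cup\dots\cup Y^{\ell+1}$. The chain-order polytope $\mathcal{O}_{C,O}(\tau)\subseteq\mathbb{R}^{\hat P_\tau}$ consists of all $x$ with $x_{\hat0}=0$, $x_{\hat1}=1$, $x_p\ge0$ for $p\in C$ (nonnegativity inequalities), $x_a\le x_b$ for $a,b\in O$ with $a\prec b$ (order inequalities), and $x_{p_1}+\dots+x_{p_k}\le x_q$ for all $p_i\in Y^i$ ($1\le i\le k$), $q\in Y^{k+1}$ (chain inequalities). Codimension of a face $F$ is $|\tau|-\dim F$. The partition $\varphi$ of $O$ associated with $F$ has as blocks the connected components of the graph with vertex set $O$ and edges $\{a,b\}$ for all $a\prec b$ in $O$ with $x_a=x_b$ for every $x\in F$. A partition $\pi$ of $\hat P_\tau$ is compatible if the transitive closure of the relation "$B\le B'$ iff $p\le q$ for some $p\in B$, $q\in B'$" on blocks is antisymmetric; it is then a partial order, and $\hat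 P_\tau/\pi$ denotes the set of blocks with this order (the quotient poset). *)

theory Defs
  imports "HOL-Analysis.Analysis" "HOL-Library.Function_Algebras"
begin

instantiation "fun" :: (type, real_vector) real_vector
begin
definition scaleR_fun :: "real \<Rightarrow> ('a \<Rightarrow> 'b) \<Rightarrow> 'a \<Rightarrow> 'b"
  where "scaleR_fun r f = (\<lambda>x. r *\<^sub>R f x)"
instance
  by standard (auto simp: scaleR_fun_def plus_fun_def scaleR_add_right scaleR_add_left)
end

definition affdim :: "'a::real_vector set \<Rightarrow> nat" where
  "affdim S = dim {x - y | x y. x \<in> S \<and> y \<in> S}"

text \<open>\<open>\<tau> = [\<tau>_1,...,\<tau>_l]\<close>; element \<open>y^i_j\<close> is the pair \<open>(i,j)\<close>;
  \<open>\<hat>0 = (0,1)\<close>, \<open>\<hat>1 = (l+1,1)\<close>.\<close>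
definition Y :: "nat list \<Rightarrow> nat \<Rightarrow> (nat \<times> nat) set" where
  "Y \<tau> i = (if i = 0 then {(0,1)}
            else if i \<le> length \<tau> then {(i,j) | j. 1 \<le> j \<and> j \<le> \<tau> ! (i - 1)}
            else if i = Suc (length \<tau>) then {(Suc (length \<tau>), 1)}
            else {})"

definition Phat :: "nat list \<Rightarrow> (nat \<times> nat) set" where
  "Phat \<tau> = (\<Union>i\<in>{0..Suc (length \<tau>)}. Y \<tau> i)"

definition hat0 :: "nat \<times> nat" where "hat0 = (0,1)"
definition hat1 :: "nat list \<Rightarrow> nat \<times> nat" where "hat1 \<tau> = (Suc (length \<tau>), 1)"

definition ple :: "nat \<times> nat \<Rightarrow> nat \<times> nat \<Rightarrow> bool" where
  "ple p q \<longleftrightarrow> p = q \<or> fst p < fst q"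

definition covers :: "('a \<Rightarrow> 'a \<Rightarrow> bool) \<Rightarrow> 'a set \<Rightarrow> 'a \<Rightarrow> 'a \<Rightarrow> bool" where
  "covers le S a b \<longleftrightarrow> a \<in> S \<and> b \<in> S \<and> le a b \<and> a \<noteq> b \<and>
     \<not> (\<exists>c\<in>S. le a c \<and> le c b \<and> c \<noteq> a \<and> c \<noteq> b)"

definition Cset :: "nat list \<Rightarrow> nat \<Rightarrow> (nat \<times> nat) set" where
  "Cset \<tau> k = (\<Union>i\<in>{0..k}. Y \<tau> i)"
definition Oset :: "nat list \<Rightarrow> nat \<Rightarrow> (nat \<times> nat) set" where
  "Oset \<tau> k = (\<Union>i\<in>{Suc k..Suc (length \<tau>)}. Y \<tau> i)"

text \<open>Chain-order polytope, as a subset of \<open>\<real>^{\<hat>P_\<tau>}\<close> (functions vanishing outside \<open>\<hat>P_\<tau>\<close>).\<close>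
definition chain_order_polytope :: "nat list \<Rightarrow> nat \<Rightarrow> ((nat \<times> nat) \<Rightarrow> real) set" where
  "chain_order_polytope \<tau> k = {x.
     (\<forall>p. p \<notin> Phat \<tau> \<longrightarrow> x p = 0) \<and>
     x hat0 = 0 \<and> x (hat1 \<tau>) = 1 \<and>
     (\<forall>p\<in>Cset \<tau> k. 0 \<le> x p) \<and>
     (\<forall>a\<in>Oset \<tau> k. \<forall>b\<in>Oset \<tau> k. covers ple (Phat \<tau>) a b \<longrightarrow> x a \<le> x b) \<and>
     (\<forall>ps q. (\<forall>i\<in>{1..k}. ps i \<in> Y \<tau> i) \<and> q \<in> Y \<tau> (Suc k) \<longrightarrow>
        (\<Sum>i=1..k. x (ps i)) \<le> x q)}"

definition tight_edges :: "nat list \<Rightarrow> nat \<Rightarrow> ((nat \<times> nat) \<Rightarrow> real) set \<Rightarrow> ((nat \<times> nat) \<times> (nat \<times> nat)) set" where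
  "tight_edges \<tau> k F = {(a,b). a \<in> Oset \<tau> k \<and> b \<in> Oset \<tau> k \<and> covers ple (Phat \<tau>) a b \<and>
                         (\<forall>x\<in>F. x a = x b)}"

definition assoc_partition :: "nat list \<Rightarrow> nat \<Rightarrow> ((nat \<times> nat) \<Rightarrow> real) set \<Rightarrow> (nat \<times> nat) set set" where
  "assoc_partition \<tau> k F =
     (\<lambda>a. {b \<in> Oset \<tau> k. (a,b) \<in> (tight_edges \<tau> k F \<union> (tight_edges \<tau> k F)\<inverse>)\<^sup>*}) ` Oset \<tau> k"

definition pi_part :: "nat list \<Rightarrow> nat \<Rightarrow> ((nat \<times> nat) \<Rightarrow> real) set \<Rightarrow> (nat \<times> nat) set set" where
  "pi_part \<tau> k F = assoc_partition \<tau> k F \<union> (\<lambda>c. {c}) ` Cset \<tau> k"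

definition block_rel :: "('a \<Rightarrow> 'a \<Rightarrow> bool) \<Rightarrow> 'a set set \<Rightarrow> ('a set \<times> 'a set) set" where
  "block_rel le \<pi> = {(B,B'). B \<in> \<pi> \<and> B' \<in> \<pi> \<and> (\<exists>p\<in>B. \<exists>q\<in>B'. le p q)}"

definition compatible :: "('a \<Rightarrow> 'a \<Rightarrow> bool) \<Rightarrow> 'a set set \<Rightarrow> bool" where
  "compatible le \<pi> \<longleftrightarrow> antisym ((block_rel le \<pi>)\<^sup>+)"

definition quot_le :: "('a \<Rightarrow> 'a \<Rightarrow> bool) \<Rightarrow> 'a set set \<Rightarrow> 'a set \<Rightarrow> 'a set \<Rightarrow> bool" where
  "quot_le le \<pi> B B' \<longleftrightarrow> (B,B') \<in> (block_rel le \<pi>)\<^sup>+"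

definition block_of :: "'a set set \<Rightarrow> 'a \<Rightarrow> 'a set" where
  "block_of \<pi> p = (THE B. B \<in> \<pi> \<and> p \<in> B)"

definition top_block :: "nat list \<Rightarrow> nat \<Rightarrow> ((nat \<times> nat) \<Rightarrow> real) set \<Rightarrow> (nat \<times> nat) set" where
  "top_block \<tau> k F = block_of (pi_part \<tau> k F) (hat1 \<tau>)"

text \<open>The polytope \<open>O_{C_\<pi>,\<phi>}(\<hat>P_\<tau>/\<pi>) \<subseteq> \<real>^\<pi>\<close> (functions on blocks vanishing outside \<open>\<pi>\<close>).\<close>
definition quot_polytope :: "nat list \<Rightarrow> nat \<Rightarrow> ((nat \<times> nat) \<Rightarrow> real) set \<Rightarrow> ((nat \<times> nat) set \<Rightarrow> real) set" where
  "quot_polytope \<tau> k F = (let \<pi> = pi_part \<tau> k F; \<phi> = assoc_partition \<tau> k F;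
       C\<pi> = (\<lambda>c. {c}) ` Cset \<tau> k; T = top_block \<tau> k F;
       qcov = covers (quot_le ple \<pi>) \<pi> in
     {y. (\<forall>B. B \<notin> \<pi> \<longrightarrow> y B = 0) \<and>
         y {hat0} = 0 \<and> y T = 1 \<and>
         (\<forall>B\<in>C\<pi>. 0 \<le> y B) \<and>
         (\<forall>B\<in>\<phi>. \<forall>B'\<in>\<phi>. qcov B B' \<longrightarrow> y B \<le> y B') \<and>
         (\<forall>Bs A. set Bs \<subseteq> C\<pi> \<and> A \<in> \<phi> \<and>
              (let L = {hat0} # Bs @ [A] in \<forall>i. Suc i < length L \<longrightarrow> qcov (L ! i) (L ! Suc i))
            \<longrightarrow> sum_list (map y Bs) \<le> y A)})"

definition lift_map :: "nat list \<Rightarrow> nat \<Rightarrow> ((nat \<times> nat) \<Rightarrow> real) set \<Rightarrow> ((nat \<times> nat) set \<Rightarrow> real) \<Rightarrow> (nat \<times> nat) \<Rightarrow> real" where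
  "lift_map \<tau> k F y = (\<lambda>p. if p \<in> Phat \<tau> then y (block_of (pi_part \<tau> k F) p) else 0)"

end

(* By hypothesis, the inequalities of the chain-order polytope that are tight on F are exactly
   the order inequalities x_a <= x_b along the covering pairs of O on which F is constant.  A face
   of a polyhedron consists of the points of the polyhedron satisfying its tight inequalities with
   equality, so F is the set of points of the polytope that are constant on the blocks of pi.
   A point z of F satisfying all other inequalities strictly separates the blocks: the levels of
   C, followed by the values of z on O, form a potential that increases strictly between distinct
   comparable blocks, hence pi is compatible.  Every point of F is then the lift of a function on
   the blocks, and the inequalities of the chain-order polytope turn into those of the quotient
   polytope: order inequalities become monotonicity along the quotient order, and a saturated
   chain from {hat0} through C-singletons into phi has to pass through all levels 0, ..., k.
   Finally, the directions of F are the functions constant on the blocks and vanishing on {hat0}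
   and T, a space of dimension |pi| - 2 = |phi| + |C| - 2. *)
theory Submission
  imports Defs
begin

section \<open>Faces of polyhedra in real vector spaces\<close>

lemma scaleR_fun_apply [simp]: "(r *\<^sub>R f) x = r *\<^sub>R f x"
  by (simp add: scaleR_fun_def)

lemma sum_fun_apply [simp]: "(\<Sum>a\<in>A. f a) x = (\<Sum>a\<in>A. f a x)"
  by (induction A rule: infinite_finite_induct) auto

lemma linear_eval: "linear (\<lambda>x :: 'a \<Rightarrow> real. x p)"
  by (rule linearI) simp_all

lemma exists_small_pos_perturbation:
  fixes a b :: "'i \<Rightarrow> real"
  assumes "finite I" and "\<And>i. i \<in> I \<Longrightarrow> 0 < a i"
  obtains e where "0 < e" and "\<And>i. i \<in> I \<Longrightarrow> 0 < a i + e * b i"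
proof -
  have "\<forall>\<^sub>F e in at_right 0. 0 < a i + e * b i" if "i \<in> I" for i
  proof (rule order_tendstoD(1))
    show "((\<lambda>e. a i + e * b i) \<longlongrightarrow> a i + 0 * b i) (at_right 0)"
      by (intro tendsto_intros)
  qed (use assms(2) that in simp)
  then have "\<forall>\<^sub>F e in at_right 0. 0 < e \<and> (\<forall>i\<in>I. 0 < a i + e * b i)"
    using assms(1) eventually_at_right_less by (auto simp: eventually_ball_finite eventually_conj_iff)
  then show thesis
    using that eventually_happens'[OF trivial_limit_at_right_real] by blast
qed

lemma subspace_common_zeros:
  assumes "\<And>f. f \<in> L \<Longrightarrow> linear f"
  shows "subspace {v. \<forall>f\<in>L. f v = 0}"
proof (rule subspaceI)
  show "0 \<in> {v. \<forall>f\<in>L. f v = 0}"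
    using assms linear_0 by blast
next
  fix v w assume "v \<in> {v. \<forall>f\<in>L. f v = 0}" "w \<in> {v. \<forall>f\<in>L. f v = 0}"
  then have "f (v + w) = 0" if "f \<in> L" for f
    using that linear_add[OF assms[OF that]] by auto
  then show "v + w \<in> {v. \<forall>f\<in>L. f v = 0}" by simp
next
  fix c v assume "v \<in> {v. \<forall>f\<in>L. f v = 0}"
  then have "f (c *\<^sub>R v) = 0" if "f \<in> L" for f
    using that linear_scale[OF assms[OF that]] by auto
  then show "c *\<^sub>R v \<in> {v. \<forall>f\<in>L. f v = 0}" by simp
qed

lemma mem_face_of_if_prolongable:
  assumes face: "T face_of S" and "z \<in> T" "x \<in> S" "0 < e" "z + e *\<^sub>R (z - x) \<in> S"
  shows "x \<in> T"
proof -
  define w where "w = z + e *\<^sub>R (z - x)"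
  define u where "u = 1 / (1 + e)"
  have u: "0 < u" "u < 1" "u + u * e = 1"
    using \<open>0 < e\<close> by (auto simp: u_def field_simps)
  have "(1 - u) *\<^sub>R x + u *\<^sub>R w = (1 - (u + u * e)) *\<^sub>R x + (u + u * e) *\<^sub>R z"
    by (simp add: w_def algebra_simps)
  then have z_eq: "z = (1 - u) *\<^sub>R x + u *\<^sub>R w"
    using u(3) by simp
  show ?thesis
  proof (cases "x = w")
    case True
    then have "x = z" using z_eq by (simp add: algebra_simps)
    then show ?thesis using \<open>z \<in> T\<close> by simp
  next
    case False
    then have "z \<in> open_segment x w"
      unfolding in_segment using u z_eq by blast
    then show ?thesis
      using face_ofD[OF face] assms(2,3,5) by (auto simp: w_def)
  qed
qed

locale polyhedron_face =
  fixes E :: "(('a::real_vector \<Rightarrow> real) \<times> real) set"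
    and H :: "('a \<Rightarrow> real) set"
    and F :: "'a set"
  assumes linear_eqs: "(g, c) \<in> E \<Longrightarrow> linear g"
    and finite_ineqs: "finite H"
    and linear_ineqs: "h \<in> H \<Longrightarrow> linear h"
    and face: "F face_of {x. (\<forall>g c. (g, c) \<in> E \<longrightarrow> g x = c) \<and> (\<forall>h\<in>H. 0 \<le> h x)}"
    and nonempty: "F \<noteq> {}"
begin

abbreviation polyhedron :: "'a set" where
  "polyhedron \<equiv> {x. (\<forall>g c. (g, c) \<in> E \<longrightarrow> g x = c) \<and> (\<forall>h\<in>H. 0 \<le> h x)}"

definition tight_ineqs :: "('a \<Rightarrow> real) set" where
  "tight_ineqs = {h \<in> H. \<forall>x\<in>F. h x = 0}"

definition face_directions :: "'a set" where
  "face_directions = {v. (\<forall>g c. (g, c) \<in> E \<longrightarrow> g v = 0) \<and> (\<forall>h\<in>tight_ineqs. h v = 0)}"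

lemma face_eqs: "x \<in> F \<Longrightarrow> (g, c) \<in> E \<Longrightarrow> g x = c"
  using face_of_imp_subset[OF face] by blast

lemma face_ineqs: "x \<in> F \<Longrightarrow> h \<in> H \<Longrightarrow> 0 \<le> h x"
  using face_of_imp_subset[OF face] by blast

lemma exists_strict_point:
  obtains z where "z \<in> F" and "\<forall>h\<in>H - tight_ineqs. 0 < h z"
proof -
  have "\<exists>z\<in>F. \<forall>h\<in>H'. 0 < h z" if "finite H'" "H' \<subseteq> H - tight_ineqs" for H'
    using that
  proof (induction H' rule: finite_induct)
    case empty
    then show ?case using nonempty by auto
  next
    case (insert h H')
    then obtain z where z: "z \<in> F" "\<forall>h\<in>H'. 0 < h z" by auto
    from insert.prems obtain w where w: "w \<in> F" "h w \<noteq> 0"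
      by (auto simp: tight_ineqs_def)
    define m where "m = (1/2) *\<^sub>R z + (1/2) *\<^sub>R w"
    have "m \<in> F"
      unfolding m_def using face_of_imp_convex[OF face] z(1) w(1) by (intro convexD) auto
    moreover have "0 < h' m" if "h' \<in> insert h H'" for h'
    proof -
      have "linear h'" using that insert.prems by (auto intro: linear_ineqs)
      then have "h' m = (h' z + h' w) / 2"
        by (simp add: m_def linear_add linear_scale)
      moreover have "0 \<le> h' z" "0 \<le> h' w"
        using face_ineqs z(1) w(1) that insert.prems by auto
      moreover have "0 < h' z \<or> 0 < h' w"
        using that z(2) w(2) \<open>0 \<le> h' w\<close> by auto
      ultimately show ?thesis by auto
    qed
    ultimately show ?case by blast
  qed
  then obtain z where "z \<in> F" "\<forall>h\<in>H - tight_ineqs. 0 < h z"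
    using finite_ineqs by blast
  then show thesis using that by blast
qed

lemma exists_perturbation_in_polyhedron:
  assumes z: "z \<in> F" "\<forall>h\<in>H - tight_ineqs. 0 < h z"
    and v: "v \<in> face_directions"
  obtains e where "0 < e" and "z + e *\<^sub>R v \<in> polyhedron"
    and "\<forall>h\<in>tight_ineqs. h (z + e *\<^sub>R v) = 0"
proof -
  obtain e where e: "0 < e" "\<And>h. h \<in> H - tight_ineqs \<Longrightarrow> 0 < h z + e * h v"
    by (rule exists_small_pos_perturbation[of "H - tight_ineqs" "\<lambda>h. h z" "\<lambda>h. h v"])
      (use finite_ineqs z(2) in auto)
  have lin: "h (z + e *\<^sub>R v) = h z + e * h v" if "linear h" for h
    using that by (simp add: linear_add linear_scale)
  have tight: "h (z + e *\<^sub>R v) = 0" if "h \<in> tight_ineqs" for h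
    using that v z(1) lin[of h] linear_ineqs by (auto simp: tight_ineqs_def face_directions_def)
  have "g (z + e *\<^sub>R v) = c" if "(g, c) \<in> E" for g c
  proof -
    have "g v = 0" using v that by (auto simp: face_directions_def)
    then show ?thesis using face_eqs[OF z(1) that] lin[OF linear_eqs[OF that]] by simp
  qed
  moreover have "0 \<le> h (z + e *\<^sub>R v)" if "h \<in> H" for h
  proof (cases "h \<in> tight_ineqs")
    case True
    then show ?thesis using tight[OF True] by simp
  next
    case False
    then show ?thesis using that e(2)[of h] lin[OF linear_ineqs[OF that]] by simp
  qed
  ultimately have "z + e *\<^sub>R v \<in> polyhedron"
    by auto
  then show thesis using e(1) tight that by blast
qed

lemma face_eq_tight: "F = {x \<in> polyhedron. \<forall>h\<in>tight_ineqs. h x = 0}"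
proof
  show "F \<subseteq> {x \<in> polyhedron. \<forall>h\<in>tight_ineqs. h x = 0}"
    using face_eqs face_ineqs by (auto simp: tight_ineqs_def)
next
  obtain z where z: "z \<in> F" "\<forall>h\<in>H - tight_ineqs. 0 < h z"
    using exists_strict_point by blast
  show "{x \<in> polyhedron. \<forall>h\<in>tight_ineqs. h x = 0} \<subseteq> F"
  proof
    fix x assume "x \<in> {x \<in> polyhedron. \<forall>h\<in>tight_ineqs. h x = 0}"
    then have x: "x \<in> polyhedron" "\<forall>h\<in>tight_ineqs. h x = 0"
      by blast+
    have "g (z - x) = 0" if "(g, c) \<in> E" for g c
    proof -
      have "g x = c" using x(1) that by blast
      then show ?thesis using face_eqs[OF z(1) that] linear_diff[OF linear_eqs[OF that]] by simp
    qed
    moreover have "h (z - x) = 0" if "h \<in> tight_ineqs" for h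
      using x(2) that z(1) linear_diff[OF linear_ineqs, of h] by (auto simp: tight_ineqs_def)
    ultimately have "z - x \<in> face_directions"
      by (auto simp: face_directions_def)
    then obtain e where e: "0 < e" "z + e *\<^sub>R (z - x) \<in> polyhedron"
      "\<forall>h\<in>tight_ineqs. h (z + e *\<^sub>R (z - x)) = 0"
      by (rule exists_perturbation_in_polyhedron[OF z])
    show "x \<in> F"
      by (rule mem_face_of_if_prolongable[OF face z(1) x(1) e(1,2)])
  qed
qed

lemma span_face_differences: "span {x - y | x y. x \<in> F \<and> y \<in> F} = face_directions"
proof (rule span_subspace)
  show "{x - y | x y. x \<in> F \<and> y \<in> F} \<subseteq> face_directions"
  proof clarify
    fix x y assume "x \<in> F" "y \<in> F"
    then have "g (x - y) = 0" if "(g, c) \<in> E" for g c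
      using face_eqs[OF \<open>x \<in> F\<close> that] face_eqs[OF \<open>y \<in> F\<close> that]
        linear_diff[OF linear_eqs[OF that]] by simp
    moreover have "h (x - y) = 0" if "h \<in> tight_ineqs" for h
      using \<open>x \<in> F\<close> \<open>y \<in> F\<close> that linear_diff[OF linear_ineqs, of h]
      by (auto simp: tight_ineqs_def)
    ultimately show "x - y \<in> face_directions"
      by (auto simp: face_directions_def)
  qed
  have "face_directions = {v. \<forall>f\<in>fst ` E \<union> tight_ineqs. f v = 0}"
    by (force simp: face_directions_def)
  moreover have "subspace {v. \<forall>f\<in>fst ` E \<union> tight_ineqs. f v = 0}"
    by (rule subspace_common_zeros) (use linear_eqs linear_ineqs in \<open>auto simp: tight_ineqs_def\<close>)
  ultimately show "subspace face_directions"
    by simp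
  show "face_directions \<subseteq> span {x - y | x y. x \<in> F \<and> y \<in> F}"
  proof
    fix v assume v: "v \<in> face_directions"
    obtain z where z: "z \<in> F" "\<forall>h\<in>H - tight_ineqs. 0 < h z"
      using exists_strict_point by blast
    obtain e where e: "0 < e" "z + e *\<^sub>R v \<in> polyhedron"
      "\<forall>h\<in>tight_ineqs. h (z + e *\<^sub>R v) = 0"
      by (rule exists_perturbation_in_polyhedron[OF z v])
    then have "z + e *\<^sub>R v \<in> F"
      by (subst face_eq_tight) auto
    then have "(z + e *\<^sub>R v) - z \<in> span {x - y | x y. x \<in> F \<and> y \<in> F}"
      using z(1) by (intro span_base) blast
    then have "(1 / e) *\<^sub>R ((z + e *\<^sub>R v) - z) \<in> span {x - y | x y. x \<in> F \<and> y \<in> F}"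
      by (rule span_scale)
    then show "v \<in> span {x - y | x y. x \<in> F \<and> y \<in> F}"
      using e(1) by simp
  qed
qed

end

section \<open>Functions constant on the blocks of a disjoint family\<close>

definition blockwise_constant :: "'a set set \<Rightarrow> ('a \<Rightarrow> real) set" where
  "blockwise_constant \<B> =
     {v. (\<forall>p. p \<notin> \<Union>\<B> \<longrightarrow> v p = 0) \<and> (\<forall>B\<in>\<B>. \<forall>p\<in>B. \<forall>q\<in>B. v p = v q)}"

lemma subspace_blockwise_constant: "subspace (blockwise_constant \<B>)"
proof (rule subspaceI)
  fix v w assume v: "v \<in> blockwise_constant \<B>" and w: "w \<in> blockwise_constant \<B>"
  show "v + w \<in> blockwise_constant \<B>"
    unfolding blockwise_constant_def mem_Collect_eq plus_fun_apply
  proof (intro conjI allI impI ballI)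
    show "v p + w p = 0" if "p \<notin> \<Union>\<B>" for p
      using v w that unfolding blockwise_constant_def by simp
    show "v p + w p = v q + w q" if "B \<in> \<B>" "p \<in> B" "q \<in> B" for B p q
    proof -
      have "v p = v q" "w p = w q"
        using v w that unfolding blockwise_constant_def by blast+
      then show ?thesis by simp
    qed
  qed
next
  fix c v assume v: "v \<in> blockwise_constant \<B>"
  show "c *\<^sub>R v \<in> blockwise_constant \<B>"
    unfolding blockwise_constant_def mem_Collect_eq scaleR_fun_apply
  proof (intro conjI allI impI ballI)
    show "c *\<^sub>R v p = 0" if "p \<notin> \<Union>\<B>" for p
      using v that unfolding blockwise_constant_def by simp
    show "c *\<^sub>R v p = c *\<^sub>R v q" if "B \<in> \<B>" "p \<in> B" "q \<in> B" for B p q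
    proof -
      have "v p = v q"
        using v that unfolding blockwise_constant_def by blast
      then show ?thesis by simp
    qed
  qed
qed (simp add: blockwise_constant_def)

lemma sum_indicator_disjoint:
  fixes c :: "'a set \<Rightarrow> real"
  assumes "finite \<B>" "disjoint \<B>" "B \<in> \<B>" "p \<in> B"
  shows "(\<Sum>B'\<in>\<B>. c B' * indicator B' p) = c B"
proof -
  have "(\<Sum>B'\<in>\<B>. c B' * indicator B' p) = (\<Sum>B'\<in>\<B>. if B' = B then c B' else 0)"
    by (rule sum.cong) (use assms(2-4) in \<open>auto simp: indicator_def disjoint_def\<close>)
  then show ?thesis
    using assms(1,3) by simp
qed

lemma indicator_mem_blockwise_constant:
  assumes "disjoint \<B>" "B \<in> \<B>"
  shows "indicator B \<in> blockwise_constant \<B>"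
proof -
  have "indicator B p = (indicator B q :: real)" if "B' \<in> \<B>" "p \<in> B'" "q \<in> B'" for B' p q
    using assms that by (cases "B' = B") (auto simp: indicator_def disjoint_def)
  moreover have "indicator B p = (0::real)" if "p \<notin> \<Union>\<B>" for p
    using that assms(2) by (simp add: indicator_def)
  ultimately show ?thesis
    unfolding blockwise_constant_def by blast
qed

lemma blockwise_constant_eq_sum_indicators:
  assumes fin: "finite \<B>" and disj: "disjoint \<B>" and v: "v \<in> blockwise_constant \<B>"
  shows "v = (\<Sum>B\<in>\<B>. v (SOME p. p \<in> B) *\<^sub>R indicator B)"
proof
  fix p
  show "v p = (\<Sum>B\<in>\<B>. v (SOME p. p \<in> B) *\<^sub>R indicator B) p"
  proof (cases "p \<in> \<Union>\<B>")
    case True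
    then obtain B where B: "B \<in> \<B>" "p \<in> B" by blast
    moreover have "(SOME p. p \<in> B) \<in> B"
      using B(2) by (rule someI)
    ultimately have "v (SOME p. p \<in> B) = v p"
      using v unfolding blockwise_constant_def by blast
    then show ?thesis
      using sum_indicator_disjoint[OF fin disj B, of "\<lambda>B. v (SOME p. p \<in> B)"] by simp
  next
    case False
    then show ?thesis
      using v by (auto simp: blockwise_constant_def indicator_def)
  qed
qed

lemma span_indicators:
  assumes "finite \<B>" "disjoint \<B>"
  shows "span ((\<lambda>B. indicator B) ` \<B>) = blockwise_constant \<B>"
proof (rule span_subspace)
  show "(\<lambda>B. indicator B) ` \<B> \<subseteq> blockwise_constant \<B>"
    using indicator_mem_blockwise_constant[OF assms(2)] by blast
  show "blockwise_constant \<B> \<subseteq> span ((\<lambda>B. indicator B) ` \<B>)"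
  proof
    fix v assume "v \<in> blockwise_constant \<B>"
    then have "v = (\<Sum>B\<in>\<B>. v (SOME p. p \<in> B) *\<^sub>R indicator B)"
      by (rule blockwise_constant_eq_sum_indicators[OF assms])
    also have "\<dots> \<in> span ((\<lambda>B. indicator B) ` \<B>)"
      by (intro span_sum span_scale span_base) auto
    finally show "v \<in> span ((\<lambda>B. indicator B) ` \<B>)" .
  qed
qed (rule subspace_blockwise_constant)

lemma inj_indicator: "inj (\<lambda>B. indicator B :: 'a \<Rightarrow> real)"
proof (rule injI)
  fix A B :: "'a set" assume "indicator A = (indicator B :: 'a \<Rightarrow> real)"
  then have ind_eq: "indicator A p = (indicator B p :: real)" for p
    by simp
  have "p \<in> A \<longleftrightarrow> p \<in> B" for p
    using ind_eq[of p] by (cases "p \<in> A"; cases "p \<in> B") simp_all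
  then show "A = B" by blast
qed

lemma independent_indicators:
  assumes fin: "finite \<B>" and disj: "disjoint \<B>" and ne: "{} \<notin> \<B>"
  shows "independent ((\<lambda>B. indicator B :: 'a \<Rightarrow> real) ` \<B>)"
proof (rule independent_if_scalars_zero)
  show "finite ((\<lambda>B. indicator B :: 'a \<Rightarrow> real) ` \<B>)"
    using fin by simp
next
  fix f and w :: "'a \<Rightarrow> real"
  assume sum0: "(\<Sum>x\<in>(\<lambda>B. indicator B :: 'a \<Rightarrow> real) ` \<B>. f x *\<^sub>R x) = 0"
    and "w \<in> (\<lambda>B. indicator B) ` \<B>"
  then obtain B where B: "B \<in> \<B>" "w = indicator B" by blast
  from B(1) ne have "B \<noteq> {}" by blast
  then obtain p where "p \<in> B" by blast
  have "inj_on (\<lambda>B. indicator B :: 'a \<Rightarrow> real) \<B>"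
    using inj_indicator by (rule inj_on_subset) simp
  then have "0 = (\<Sum>B'\<in>\<B>. f (indicator B') *\<^sub>R (indicator B' :: 'a \<Rightarrow> real)) p"
    using sum0 by (simp add: sum.reindex)
  also have "\<dots> = f w"
    using sum_indicator_disjoint[OF fin disj B(1) \<open>p \<in> B\<close>] B(2) by simp
  finally show "f w = 0" by simp
qed

lemma dim_blockwise_constant:
  assumes "finite \<B>" "disjoint \<B>" "{} \<notin> \<B>"
  shows "dim (blockwise_constant \<B>) = card \<B>"
proof -
  have "dim (blockwise_constant \<B>) = dim (span ((\<lambda>B. indicator B :: 'a \<Rightarrow> real) ` \<B>))"
    by (simp only: span_indicators[OF assms(1,2)])
  also have "\<dots> = dim ((\<lambda>B. indicator B :: 'a \<Rightarrow> real) ` \<B>)"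
    by (rule dim_span)
  also have "\<dots> = card ((\<lambda>B. indicator B :: 'a \<Rightarrow> real) ` \<B>)"
    using independent_indicators[OF assms] by (rule dim_eq_card_independent)
  also have "\<dots> = card \<B>"
    using inj_on_subset[OF inj_indicator subset_UNIV] by (rule card_image)
  finally show ?thesis .
qed

section \<open>Finite posets and quotient orders\<close>

locale finite_poset =
  fixes S :: "'a set" and le :: "'a \<Rightarrow> 'a \<Rightarrow> bool"
  assumes finite: "finite S"
    and refl: "a \<in> S \<Longrightarrow> le a a"
    and trans: "a \<in> S \<Longrightarrow> b \<in> S \<Longrightarrow> c \<in> S \<Longrightarrow> le a b \<Longrightarrow> le b c \<Longrightarrow> le a c"
    and antisym: "a \<in> S \<Longrightarrow> b \<in> S \<Longrightarrow> le a b \<Longrightarrow> le b a \<Longrightarrow> a = b"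
begin

definition strict :: "('a \<times> 'a) set" where
  "strict = {(a, b). a \<in> S \<and> b \<in> S \<and> le a b \<and> a \<noteq> b}"

lemma wf_strict: "wf strict" and wf_converse_strict: "wf (strict\<inverse>)"
proof -
  have "trans strict"
    unfolding strict_def by (rule transI) (auto intro: trans dest: antisym)
  moreover have "irrefl strict" and "finite strict"
    using finite by (auto simp: strict_def irrefl_def intro: finite_subset[of _ "S \<times> S"])
  ultimately show "wf (strict\<inverse>)" "wf strict"
    using wf_converse[of strict] wf_converse[of "strict\<inverse>"] by (auto simp: irrefl_def)
qed

lemma exists_cover_below:
  assumes "a \<in> S" "b \<in> S" "le a b" "a \<noteq> b"
  obtains c where "covers le S a c" and "le c b"
proof -
  let ?M = "{c \<in> S. le a c \<and> a \<noteq> c \<and> le c b}"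
  obtain m where m: "m \<in> ?M" and min: "\<And>c. (c, m) \<in> strict \<Longrightarrow> c \<notin> ?M"
    using wfE_min[OF wf_strict, of b ?M] assms refl by blast
  have "covers le S a m"
    unfolding covers_def
  proof (intro conjI notI)
    assume "\<exists>c\<in>S. le a c \<and> le c m \<and> c \<noteq> a \<and> c \<noteq> m"
    then obtain c where "c \<in> S" "le a c" "le c m" "c \<noteq> a" "c \<noteq> m" by blast
    then show False
      using min[of c] m trans[of c m b] assms(2) by (auto simp: strict_def)
  qed (use m assms in auto)
  then show thesis using that m by blast
qed

lemma monotone_if_monotone_on_covers:
  fixes f :: "'a \<Rightarrow> 'b::order"
  assumes cov: "\<And>a b. covers le S a b \<Longrightarrow> f a \<le> f b"
    and "a \<in> S" "b \<in> S" "le a b"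
  shows "f a \<le> f b"
  using assms(2-4)
proof (induction a rule: wf_induct_rule[OF wf_converse_strict])
  case (1 a)
  show ?case
  proof (cases "a = b")
    case False
    then obtain c where c: "covers le S a c" "le c b"
      using exists_cover_below 1 by blast
    then have "f c \<le> f b"
      using 1 by (auto simp: covers_def strict_def)
    then show ?thesis using cov[OF c(1)] by simp
  qed simp
qed

end

lemma eq_along_rtrancl_symcl:
  assumes "\<And>a b. (a, b) \<in> R \<Longrightarrow> f a = f b" and "(a, b) \<in> (R \<union> R\<inverse>)\<^sup>*"
  shows "f a = f b"
  using assms(2) by (induction rule: rtrancl_induct) (auto dest: assms(1))

lemma successively_Suc_levels:
  assumes "successively (\<lambda>a b. f b = Suc (f a)) xs" "i < length xs"
  shows "f (xs ! i) = f (xs ! 0) + i"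
  using assms(2)
proof (induction i)
  case (Suc i)
  then show ?case
    using successively_nth[OF assms(1), of i] by simp
qed simp

lemma not_mem_Union_other_blocks:
  assumes "disjoint \<pi>" "\<S> \<subseteq> \<pi>" "B \<in> \<pi> - \<S>" "p \<in> B"
  shows "p \<notin> \<Union>\<S>"
proof
  assume "p \<in> \<Union>\<S>"
  then obtain B' where "B' \<in> \<S>" "p \<in> B'"
    by blast
  then have "B' = B"
    using assms unfolding disjoint_def by blast
  then show False
    using assms(3) \<open>B' \<in> \<S>\<close> by blast
qed

lemma block_of_eq:
  assumes "disjoint \<pi>" "B \<in> \<pi>" "p \<in> B"
  shows "block_of \<pi> p = B"
  unfolding block_of_def by (rule the_equality) (use assms in \<open>auto simp: disjoint_def\<close>)

lemma block_of_quotient: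
  assumes "equiv A r" "p \<in> A"
  shows "block_of (A // r) p = r `` {p}"
proof (rule block_of_eq)
  show "disjoint (A // r)"
    using quotient_disj[OF assms(1)] by (auto simp: disjoint_def)
  show "r `` {p} \<in> A // r" using assms(2) by (rule quotientI)
  show "p \<in> r `` {p}" using assms by (rule equiv_class_self)
qed

lemma quot_le_of_le:
  "B \<in> \<pi> \<Longrightarrow> B' \<in> \<pi> \<Longrightarrow> p \<in> B \<Longrightarrow> q \<in> B' \<Longrightarrow> le p q \<Longrightarrow> quot_le le \<pi> B B'"
  unfolding quot_le_def block_rel_def by (rule r_into_trancl) auto

lemma quot_le_trans: "quot_le le \<pi> A B \<Longrightarrow> quot_le le \<pi> B C \<Longrightarrow> quot_le le \<pi> A C"
  unfolding quot_le_def by (rule trancl_trans)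

lemma quot_le_upward_closed:
  assumes "quot_le le \<pi> A B" "A \<in> \<A>"
    and step: "\<And>B B'. (B, B') \<in> block_rel le \<pi> \<Longrightarrow> B \<in> \<A> \<Longrightarrow> B' \<in> \<A>"
  shows "B \<in> \<A>"
  using assms(1,2) unfolding quot_le_def by (induction rule: trancl_induct) (auto intro: step)

lemma quot_le_downward_closed:
  assumes "quot_le le \<pi> A B" "B \<in> \<A>"
    and step: "\<And>B B'. (B, B') \<in> block_rel le \<pi> \<Longrightarrow> B' \<in> \<A> \<Longrightarrow> B \<in> \<A>"
  shows "A \<in> \<A>"
  using assms(1,2) unfolding quot_le_def by (induction rule: converse_trancl_induct) (auto intro: step)

lemma quot_le_monotone:
  fixes g :: "'a set \<Rightarrow> 'b::order"
  assumes "quot_le le \<pi> A B" "A \<in> \<A>"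
    and step: "\<And>B B'. (B, B') \<in> block_rel le \<pi> \<Longrightarrow> B \<in> \<A> \<Longrightarrow> B' \<in> \<A> \<and> g B \<le> g B'"
  shows "g A \<le> g B"
proof -
  have "B \<in> \<A> \<and> g A \<le> g B"
    using assms(1,2) unfolding quot_le_def
    by (induction rule: trancl_induct) (auto dest: step intro: order_trans)
  then show ?thesis ..
qed

lemma compatible_if_strict_potential:
  fixes g :: "'a set \<Rightarrow> 'b::order"
  assumes step: "\<And>B B'. (B, B') \<in> block_rel le \<pi> \<Longrightarrow> B \<noteq> B' \<Longrightarrow> g B < g B'"
  shows "compatible le \<pi>"
proof -
  have strict: "B = B' \<or> g B < g B'" if "(B, B') \<in> (block_rel le \<pi>)\<^sup>+" for B B'
    using that by (induction rule: trancl_induct) (auto dest: step intro: less_trans)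
  show ?thesis
    unfolding compatible_def
    by (rule antisymI) (use strict less_asym in blast)
qed

section \<open>The poset \<open>\<hat>P\<^sub>\<tau>\<close> and its chain-order polytope\<close>

lemma fst_of_mem_Y: "p \<in> Y \<tau> i \<Longrightarrow> fst p = i"
  by (auto simp: Y_def split: if_splits)

lemma finite_Y: "finite (Y \<tau> i)"
proof -
  have "Y \<tau> i \<subseteq> {i} \<times> {0..(if i = 0 then 1 else if i \<le> length \<tau> then \<tau> ! (i - 1) else 1)}"
    by (auto simp: Y_def)
  then show ?thesis by (rule finite_subset) auto
qed

lemma finite_Phat: "finite (Phat \<tau>)"
  by (auto simp: Phat_def finite_Y)

lemma mem_Phat_iff: "p \<in> Phat \<tau> \<longleftrightarrow> fst p \<le> Suc (length \<tau>) \<and> p \<in> Y \<tau> (fst p)"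
  by (auto simp: Phat_def dest: fst_of_mem_Y)

lemma mem_Oset_iff: "p \<in> Oset \<tau> k \<longleftrightarrow> p \<in> Phat \<tau> \<and> k < fst p"
  by (auto simp: Oset_def mem_Phat_iff dest: fst_of_mem_Y)

lemma card_Y: "1 \<le> i \<Longrightarrow> i \<le> length \<tau> \<Longrightarrow> card (Y \<tau> i) = \<tau> ! (i - 1)"
proof -
  assume i: "1 \<le> i" "i \<le> length \<tau>"
  then have "Y \<tau> i = Pair i ` {1..\<tau> ! (i - 1)}"
    by (auto simp: Y_def)
  then show ?thesis
    by (simp add: card_image inj_on_def)
qed

lemma card_Phat: "card (Phat \<tau>) = sum_list \<tau> + 2"
proof -
  let ?L = "length \<tau>"
  have "card (Phat \<tau>) = (\<Sum>i\<in>{0..Suc ?L}. card (Y \<tau> i))"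
    unfolding Phat_def
    by (rule card_UN_disjoint) (auto simp: finite_Y dest: fst_of_mem_Y)
  also have "\<dots> = card (Y \<tau> 0) + (\<Sum>i=1..?L. card (Y \<tau> i)) + card (Y \<tau> (Suc ?L))"
    by (simp add: sum.atLeast0_atMost_Suc sum.atLeast_Suc_atMost)
  also have "(\<Sum>i=1..?L. card (Y \<tau> i)) = (\<Sum>i=1..?L. \<tau> ! (i - 1))"
    by (rule sum.cong) (simp_all add: card_Y)
  also have "\<dots> = sum_list \<tau>"
    by (simp add: sum.atLeast1_atMost_eq sum_list_sum_nth atLeast0LessThan)
  finally show ?thesis
    by (simp add: Y_def)
qed

lemma ple_refl [simp]: "ple p p"
  by (simp add: ple_def)

lemma ple_trans: "ple p q \<Longrightarrow> ple q r \<Longrightarrow> ple p r"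
  by (auto simp: ple_def)

lemma ple_antisym: "ple p q \<Longrightarrow> ple q p \<Longrightarrow> p = q"
  by (auto simp: ple_def)

locale decomposition =
  fixes \<tau> :: "nat list" and k :: nat
  assumes pos: "\<forall>t\<in>set \<tau>. 0 < t"
    and k_le: "k \<le> length \<tau>"
begin

lemma level_point_mem: "i \<le> Suc (length \<tau>) \<Longrightarrow> (i, 1) \<in> Y \<tau> i"
proof -
  have "0 < \<tau> ! (i - 1)" if "1 \<le> i" "i \<le> length \<tau>"
    using pos nth_mem[of "i - 1" \<tau>] that by simp
  then show "i \<le> Suc (length \<tau>) \<Longrightarrow> (i, 1) \<in> Y \<tau> i"
    by (auto simp: Y_def)
qed

lemma level_point_Phat: "i \<le> Suc (length \<tau>) \<Longrightarrow> (i, 1) \<in> Phat \<tau>"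
  using level_point_mem by (auto simp: mem_Phat_iff)

lemma mem_Cset: "p \<in> Cset \<tau> k \<longleftrightarrow> p \<in> Phat \<tau> \<and> fst p \<le> k"
  using k_le by (auto simp: Cset_def mem_Phat_iff dest: fst_of_mem_Y)

lemma Phat_eq_Cset_Un_Oset: "Phat \<tau> = Cset \<tau> k \<union> Oset \<tau> k" and Cset_Oset_disjoint: "Cset \<tau> k \<inter> Oset \<tau> k = {}"
  by (auto simp: mem_Cset mem_Oset_iff)

lemma hat0_mem_Cset: "hat0 \<in> Cset \<tau> k"
  using level_point_mem[of 0] by (simp add: mem_Cset mem_Phat_iff hat0_def)

lemma hat1_mem_Oset: "hat1 \<tau> \<in> Oset \<tau> k"
  using level_point_mem[of "Suc (length \<tau>)"] k_le by (simp add: mem_Oset_iff mem_Phat_iff hat1_def)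

lemma hat0_ple: "p \<in> Phat \<tau> \<Longrightarrow> ple hat0 p"
  by (auto simp: ple_def hat0_def mem_Phat_iff Y_def)

lemma ple_hat1: "p \<in> Phat \<tau> \<Longrightarrow> ple p (hat1 \<tau>)"
  by (auto simp: ple_def hat1_def mem_Phat_iff Y_def)


lemma polytope_outside: "x \<in> chain_order_polytope \<tau> k \<Longrightarrow> p \<notin> Phat \<tau> \<Longrightarrow> x p = 0"
  and polytope_hat0: "x \<in> chain_order_polytope \<tau> k \<Longrightarrow> x hat0 = 0"
  and polytope_hat1: "x \<in> chain_order_polytope \<tau> k \<Longrightarrow> x (hat1 \<tau>) = 1"
  and polytope_nonneg: "x \<in> chain_order_polytope \<tau> k \<Longrightarrow> p \<in> Cset \<tau> k \<Longrightarrow> 0 \<le> x p"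
  and polytope_cover: "x \<in> chain_order_polytope \<tau> k \<Longrightarrow> a \<in> Oset \<tau> k \<Longrightarrow> b \<in> Oset \<tau> k \<Longrightarrow>
    covers ple (Phat \<tau>) a b \<Longrightarrow> x a \<le> x b"
  and polytope_chain: "x \<in> chain_order_polytope \<tau> k \<Longrightarrow> \<forall>i\<in>{1..k}. ps i \<in> Y \<tau> i \<Longrightarrow>
    q \<in> Y \<tau> (Suc k) \<Longrightarrow> (\<Sum>i=1..k. x (ps i)) \<le> x q"
  unfolding chain_order_polytope_def mem_Collect_eq by blast+

sublocale Oset_poset: finite_poset "Oset \<tau> k" ple
proof
  show "finite (Oset \<tau> k)"
    using finite_Phat by (rule finite_subset[rotated]) (auto simp: mem_Oset_iff)
qed (simp, blast intro: ple_trans, blast intro: ple_antisym)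

lemma covers_Oset_imp_covers_Phat:
  assumes cov: "covers ple (Oset \<tau> k) a b"
  shows "covers ple (Phat \<tau>) a b"
  unfolding covers_def
proof (intro conjI notI)
  assume "\<exists>c\<in>Phat \<tau>. ple a c \<and> ple c b \<and> c \<noteq> a \<and> c \<noteq> b"
  then obtain c where c: "c \<in> Phat \<tau>" "ple a c" "ple c b" "c \<noteq> a" "c \<noteq> b"
    by blast
  then have "c \<in> Oset \<tau> k"
    using cov by (auto simp: covers_def mem_Oset_iff ple_def)
  then show False
    using cov c unfolding covers_def by blast
qed (use cov in \<open>auto simp: covers_def mem_Oset_iff\<close>)

lemma polytope_mono:
  assumes "x \<in> chain_order_polytope \<tau> k" "a \<in> Oset \<tau> k" "b \<in> Oset \<tau> k" "ple a b"
  shows "x a \<le> x b"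
proof (rule Oset_poset.monotone_if_monotone_on_covers[where f = x])
  show "x a' \<le> x b'" if "covers ple (Oset \<tau> k) a' b'" for a' b'
    using that covers_Oset_imp_covers_Phat[OF that] polytope_cover[OF assms(1)]
    by (auto simp: covers_def)
qed (use assms in auto)

lemma polytope_chain_le_Oset:
  assumes x: "x \<in> chain_order_polytope \<tau> k" and ps: "\<forall>i\<in>{1..k}. ps i \<in> Y \<tau> i"
    and a: "a \<in> Oset \<tau> k"
  shows "(\<Sum>i=1..k. x (ps i)) \<le> x a"
proof (cases "fst a = Suc k")
  case True
  then have "a \<in> Y \<tau> (Suc k)"
    using a by (simp add: mem_Oset_iff mem_Phat_iff)
  then show ?thesis by (rule polytope_chain[OF x ps])
next
  case False
  let ?q = "(Suc k, 1::nat)"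
  have q: "?q \<in> Y \<tau> (Suc k)"
    using k_le by (intro level_point_mem) simp
  then have "?q \<in> Oset \<tau> k"
    using k_le by (simp add: mem_Oset_iff mem_Phat_iff)
  moreover have "ple ?q a"
    using False a by (auto simp: ple_def mem_Oset_iff)
  ultimately have "x ?q \<le> x a"
    by (rule polytope_mono[OF x _ a])
  then show ?thesis
    using polytope_chain[OF x ps q] by simp
qed

lemma polytope_nonneg_Oset:
  assumes x: "x \<in> chain_order_polytope \<tau> k" and a: "a \<in> Oset \<tau> k"
  shows "0 \<le> x a"
proof -
  have levels: "\<forall>i\<in>{1..k}. (i, 1) \<in> Y \<tau> i"
  proof
    fix i :: nat assume "i \<in> {1..k}"
    then show "(i, 1) \<in> Y \<tau> i" using k_le by (intro level_point_mem) simp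
  qed
  have "0 \<le> (\<Sum>i=1..k. x (i, 1))"
    using levels k_le
    by (intro sum_nonneg polytope_nonneg[OF x]) (auto simp: mem_Cset mem_Phat_iff dest: fst_of_mem_Y)
  also have "\<dots> \<le> x a"
    using polytope_chain_le_Oset[OF x levels a] .
  finally show ?thesis .
qed

text \<open>The nonnegativity inequality at \<open>hat0\<close> is left out: it is implied by the equation for
  \<open>hat0\<close>, and it would be tight on every face.\<close>

definition polytope_eqs :: "((((nat \<times> nat) \<Rightarrow> real) \<Rightarrow> real) \<times> real) set" where
  "polytope_eqs = (\<lambda>p. ((\<lambda>x. x p), 0)) ` (- Phat \<tau>) \<union> {((\<lambda>x. x hat0), 0), ((\<lambda>x. x (hat1 \<tau>)), 1)}"

definition polytope_ineqs :: "(((nat \<times> nat) \<Rightarrow> real) \<Rightarrow> real) set" where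
  "polytope_ineqs =
     (\<lambda>p x. x p) ` (Cset \<tau> k - {hat0})
   \<union> (\<lambda>(a, b) x. x b - x a) ` {(a, b) \<in> Oset \<tau> k \<times> Oset \<tau> k. covers ple (Phat \<tau>) a b}
   \<union> (\<lambda>(ps, q) x. x q - (\<Sum>i=1..k. x (ps i))) ` (PiE {1..k} (Y \<tau>) \<times> Y \<tau> (Suc k))"

lemma cover_ineq_mem: "a \<in> Oset \<tau> k \<Longrightarrow> b \<in> Oset \<tau> k \<Longrightarrow> covers ple (Phat \<tau>) a b \<Longrightarrow>
    (\<lambda>x. x b - x a) \<in> polytope_ineqs"
  unfolding polytope_ineqs_def by (intro UnI1 UnI2) (auto intro: image_eqI[of _ _ "(a, b)"])

lemma finite_polytope_ineqs: "finite polytope_ineqs"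
proof -
  have fin: "finite (Cset \<tau> k)" "finite (Oset \<tau> k)"
    using finite_Phat[of \<tau>] by (auto simp: Phat_eq_Cset_Un_Oset)
  show ?thesis
    unfolding polytope_ineqs_def
  proof (intro finite_UnI finite_imageI)
    show "finite (Cset \<tau> k - {hat0})"
      using fin by simp
    show "finite {(a, b) \<in> Oset \<tau> k \<times> Oset \<tau> k. covers ple (Phat \<tau>) a b}"
      by (rule finite_subset[of _ "Oset \<tau> k \<times> Oset \<tau> k"]) (use fin in auto)
    show "finite (PiE {1..k} (Y \<tau>) \<times> Y \<tau> (Suc k))"
      by (intro finite_cartesian_product finite_PiE) (auto simp: finite_Y)
  qed
qed

lemma linear_polytope_eqs: "(g, c) \<in> polytope_eqs \<Longrightarrow> linear g"
  by (auto simp: polytope_eqs_def linear_eval)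

lemma linear_polytope_ineqs: "h \<in> polytope_ineqs \<Longrightarrow> linear h"
  by (auto simp: polytope_ineqs_def linear_iff algebra_simps sum.distrib sum_distrib_left)

lemma chain_order_polytope_eq:
  "chain_order_polytope \<tau> k =
    {x. (\<forall>g c. (g, c) \<in> polytope_eqs \<longrightarrow> g x = c) \<and> (\<forall>h\<in>polytope_ineqs. 0 \<le> h x)}"
proof (intro set_eqI iffI)
  fix x assume x: "x \<in> chain_order_polytope \<tau> k"
  have "g x = c" if "(g, c) \<in> polytope_eqs" for g c
    using that polytope_outside[OF x] polytope_hat0[OF x] polytope_hat1[OF x]
    by (auto simp: polytope_eqs_def)
  moreover have "0 \<le> h x" if "h \<in> polytope_ineqs" for h
    using that polytope_nonneg[OF x] polytope_cover[OF x] polytope_chain[OF x]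
    by (auto simp: polytope_ineqs_def PiE_iff)
  ultimately show "x \<in> {x. (\<forall>g c. (g, c) \<in> polytope_eqs \<longrightarrow> g x = c) \<and> (\<forall>h\<in>polytope_ineqs. 0 \<le> h x)}"
    by blast
next
  fix x assume "x \<in> {x. (\<forall>g c. (g, c) \<in> polytope_eqs \<longrightarrow> g x = c) \<and> (\<forall>h\<in>polytope_ineqs. 0 \<le> h x)}"
  then have eqs: "\<And>g c. (g, c) \<in> polytope_eqs \<Longrightarrow> g x = c"
    and ineqs: "\<And>h. h \<in> polytope_ineqs \<Longrightarrow> 0 \<le> h x"
    by blast+
  have "x p = 0" if "p \<notin> Phat \<tau>" for p
    using eqs[of "\<lambda>x. x p" 0] that by (simp add: polytope_eqs_def)
  moreover have "x hat0 = 0" "x (hat1 \<tau>) = 1"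
    using eqs[of "\<lambda>x. x hat0" 0] eqs[of "\<lambda>x. x (hat1 \<tau>)" 1] by (simp_all add: polytope_eqs_def)
  moreover have "0 \<le> x p" if "p \<in> Cset \<tau> k" for p
    using ineqs[of "\<lambda>x. x p"] that \<open>x hat0 = 0\<close>
    by (cases "p = hat0") (simp_all add: polytope_ineqs_def)
  moreover have "x a \<le> x b" if "a \<in> Oset \<tau> k" "b \<in> Oset \<tau> k" "covers ple (Phat \<tau>) a b" for a b
    using ineqs[OF cover_ineq_mem[OF that]] by simp
  moreover have "(\<Sum>i=1..k. x (ps i)) \<le> x q" if "\<forall>i\<in>{1..k}. ps i \<in> Y \<tau> i" "q \<in> Y \<tau> (Suc k)" for ps q
  proof -
    have "(\<lambda>x. x q - (\<Sum>i=1..k. x (restrict ps {1..k} i))) \<in> polytope_ineqs"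
      using that unfolding polytope_ineqs_def by (intro UnI2) (auto intro: image_eqI[of _ _ "(restrict ps {1..k}, q)"])
    then have "(\<Sum>i=1..k. x (restrict ps {1..k} i)) \<le> x q"
      using ineqs by fastforce
    then show ?thesis by simp
  qed
  ultimately show "x \<in> chain_order_polytope \<tau> k"
    unfolding chain_order_polytope_def by blast
qed

end

section \<open>Faces cut out by order inequalities\<close>

locale tight_order_face = decomposition +
  fixes F :: "((nat \<times> nat) \<Rightarrow> real) set"
  assumes face: "F face_of chain_order_polytope \<tau> k"
    and nonempty: "F \<noteq> {}"
    and nonneg_not_tight: "\<forall>p\<in>Cset \<tau> k - {hat0}. \<not> (\<forall>x\<in>F. x p = 0)"
    and chain_not_tight: "\<forall>ps q. (\<forall>i\<in>{1..k}. ps i \<in> Y \<tau> i) \<and> q \<in> Y \<tau> (Suc k) \<longrightarrow>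
                              \<not> (\<forall>x\<in>F. (\<Sum>i=1..k. x (ps i)) = x q)"
begin

abbreviation tight :: "((nat \<times> nat) \<times> (nat \<times> nat)) set" where
  "tight \<equiv> tight_edges \<tau> k F"

abbreviation \<phi> :: "(nat \<times> nat) set set" where
  "\<phi> \<equiv> assoc_partition \<tau> k F"

abbreviation \<pi> :: "(nat \<times> nat) set set" where
  "\<pi> \<equiv> pi_part \<tau> k F"

sublocale P: polyhedron_face polytope_eqs polytope_ineqs F
  by (rule polyhedron_face.intro)
    (use face nonempty finite_polytope_ineqs linear_polytope_eqs linear_polytope_ineqs in
      \<open>simp_all add: chain_order_polytope_eq\<close>)

lemma tight_ineqs_are_tight_edges:
  assumes "h \<in> P.tight_ineqs"
  obtains a b where "(a, b) \<in> tight" and "h = (\<lambda>x. x b - x a)"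
proof -
  from assms have h: "h \<in> polytope_ineqs" and vanish: "\<forall>y\<in>F. h y = 0"
    by (auto simp: P.tight_ineqs_def)
  from h show thesis
    unfolding polytope_ineqs_def
  proof (elim UnE imageE)
    fix p assume "p \<in> Cset \<tau> k - {hat0}" "h = (\<lambda>x. x p)"
    then show thesis using vanish nonneg_not_tight by auto
  next
    fix ab assume ab: "ab \<in> {(a, b) \<in> Oset \<tau> k \<times> Oset \<tau> k. covers ple (Phat \<tau>) a b}"
      and h_eq: "h = (\<lambda>(a, b) x. x b - x a) ab"
    obtain a b where "ab = (a, b)" by (cases ab) auto
    with ab h_eq vanish have "(a, b) \<in> tight" "h = (\<lambda>x. x b - x a)"
      by (auto simp: tight_edges_def)
    then show thesis by (rule that)
  next
    fix psq assume psq: "psq \<in> PiE {1..k} (Y \<tau>) \<times> Y \<tau> (Suc k)"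
      and h_eq: "h = (\<lambda>(ps, q) x. x q - (\<Sum>i=1..k. x (ps i))) psq"
    obtain ps q where "psq = (ps, q)" by (cases psq) auto
    with psq have "\<forall>i\<in>{1..k}. ps i \<in> Y \<tau> i" "q \<in> Y \<tau> (Suc k)"
      by (auto simp: PiE_iff)
    moreover have "\<forall>y\<in>F. (\<Sum>i=1..k. y (ps i)) = y q"
      using vanish h_eq \<open>psq = (ps, q)\<close> by simp
    ultimately show thesis
      using chain_not_tight by blast
  qed
qed

lemma tight_ineqs_vanish_iff:
  "(\<forall>h\<in>P.tight_ineqs. h x = 0) \<longleftrightarrow> (\<forall>(a, b)\<in>tight. x a = x b)"
proof
  assume vanish: "\<forall>h\<in>P.tight_ineqs. h x = 0"
  show "\<forall>(a, b)\<in>tight. x a = x b"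
  proof clarify
    fix a b assume ab: "(a, b) \<in> tight"
    then have "(\<lambda>x. x b - x a) \<in> P.tight_ineqs"
      using cover_ineq_mem by (auto simp: tight_edges_def P.tight_ineqs_def)
    then show "x a = x b"
      using vanish by auto
  qed
next
  assume const: "\<forall>(a, b)\<in>tight. x a = x b"
  show "\<forall>h\<in>P.tight_ineqs. h x = 0"
  proof
    fix h assume "h \<in> P.tight_ineqs"
    then obtain a b where "(a, b) \<in> tight" "h = (\<lambda>x. x b - x a)"
      by (rule tight_ineqs_are_tight_edges)
    then show "h x = 0"
      using const by auto
  qed
qed

lemma face_eq: "F = {x \<in> chain_order_polytope \<tau> k. \<forall>(a, b)\<in>tight. x a = x b}"
  using P.face_eq_tight by (simp add: chain_order_polytope_eq tight_ineqs_vanish_iff)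

lemma face_subset: "F \<subseteq> chain_order_polytope \<tau> k"
  using face_eq by blast

lemma face_constant_on_tight: "x \<in> F \<Longrightarrow> (a, b) \<in> tight \<Longrightarrow> x a = x b"
  by (auto simp: tight_edges_def)

lemma span_face_differences_eq:
  "span {x - y | x y. x \<in> F \<and> y \<in> F} =
    {v. (\<forall>p. p \<notin> Phat \<tau> \<longrightarrow> v p = 0) \<and> v hat0 = 0 \<and> v (hat1 \<tau>) = 0 \<and> (\<forall>(a, b)\<in>tight. v a = v b)}"
proof -
  have "(\<forall>g c. (g, c) \<in> polytope_eqs \<longrightarrow> g v = 0) \<longleftrightarrow>
      (\<forall>p. p \<notin> Phat \<tau> \<longrightarrow> v p = 0) \<and> v hat0 = 0 \<and> v (hat1 \<tau>) = 0" for v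
    by (auto simp: polytope_eqs_def)
  then show ?thesis
    unfolding P.span_face_differences P.face_directions_def tight_ineqs_vanish_iff by simp
qed

definition generic_point :: "((nat \<times> nat) \<Rightarrow> real) \<Rightarrow> bool" where
  "generic_point z \<longleftrightarrow> z \<in> F \<and>
     (\<forall>a b. a \<in> Oset \<tau> k \<and> b \<in> Oset \<tau> k \<and> covers ple (Phat \<tau>) a b \<and> (a, b) \<notin> tight \<longrightarrow> z a < z b)"

lemma exists_generic_point: "\<exists>z. generic_point z"
proof -
  obtain z where z: "z \<in> F" "\<forall>h\<in>polytope_ineqs - P.tight_ineqs. 0 < h z"
    using P.exists_strict_point by blast
  have "z a < z b"
    if "a \<in> Oset \<tau> k" "b \<in> Oset \<tau> k" "covers ple (Phat \<tau>) a b" "(a, b) \<notin> tight" for a b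
  proof -
    have "\<exists>y\<in>F. y b - y a \<noteq> 0"
      using that unfolding tight_edges_def by auto (metis)
    then have "(\<lambda>x. x b - x a) \<in> polytope_ineqs - P.tight_ineqs"
      using cover_ineq_mem[OF that(1-3)] unfolding P.tight_ineqs_def by blast
    from bspec[OF z(2) this] show ?thesis by simp
  qed
  with z(1) show ?thesis
    unfolding generic_point_def by blast
qed

definition block_equiv :: "((nat \<times> nat) \<times> (nat \<times> nat)) set" where
  "block_equiv = Id_on (Cset \<tau> k) \<union>
     {(a, b). a \<in> Oset \<tau> k \<and> b \<in> Oset \<tau> k \<and> (a, b) \<in> (tight \<union> tight\<inverse>)\<^sup>*}"

lemma equiv_block_equiv: "equiv (Phat \<tau>) block_equiv"
proof (rule equivI)
  show "block_equiv \<subseteq> Phat \<tau> \<times> Phat \<tau>" and "refl_on (Phat \<tau>) block_equiv"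
    by (auto simp: block_equiv_def Phat_eq_Cset_Un_Oset refl_on_def)
  have "sym ((tight \<union> tight\<inverse>)\<^sup>*)"
    by (rule sym_rtrancl[OF sym_Un_converse])
  then show "sym block_equiv"
    by (auto simp: block_equiv_def sym_def)
  show "trans block_equiv"
    using Cset_Oset_disjoint by (auto simp: block_equiv_def trans_def intro: rtrancl_trans)
qed

lemma block_equiv_refl: "p \<in> Phat \<tau> \<Longrightarrow> (p, p) \<in> block_equiv"
  using equiv_block_equiv unfolding equiv_def refl_on_def by blast

lemma tight_subset_block_equiv: "tight \<subseteq> block_equiv"
  by (auto simp: block_equiv_def tight_edges_def)

lemma block_equiv_class_Cset: "c \<in> Cset \<tau> k \<Longrightarrow> block_equiv `` {c} = {c}"
  using Cset_Oset_disjoint by (auto simp: block_equiv_def)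

lemma block_equiv_class_Oset:
  "a \<in> Oset \<tau> k \<Longrightarrow> block_equiv `` {a} = {b \<in> Oset \<tau> k. (a, b) \<in> (tight \<union> tight\<inverse>)\<^sup>*}"
  using Cset_Oset_disjoint by (auto simp: block_equiv_def)

lemma assoc_partition_eq: "\<phi> = Oset \<tau> k // block_equiv"
  unfolding assoc_partition_def quotient_def UNION_singleton_eq_range
  by (rule image_cong[OF refl]) (rule block_equiv_class_Oset[symmetric])

lemma pi_part_eq: "\<pi> = Phat \<tau> // block_equiv"
proof -
  have "Cset \<tau> k // block_equiv = (\<lambda>c. {c}) ` Cset \<tau> k"
    unfolding quotient_def UNION_singleton_eq_range
    by (rule image_cong[OF refl]) (rule block_equiv_class_Cset)
  then show ?thesis
    unfolding pi_part_def assoc_partition_eq quotient_def Phat_eq_Cset_Un_Oset by blast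
qed

lemma finite_pi: "finite \<pi>"
  using equiv_block_equiv finite_Phat
  by (simp add: pi_part_eq finite_quotient equiv_def)

lemma disjoint_pi: "disjoint \<pi>"
  using quotient_disj[OF equiv_block_equiv] by (auto simp: pi_part_eq disjoint_def)

lemma pi_nonempty: "B \<in> \<pi> \<Longrightarrow> B \<noteq> {}"
  using in_quotient_imp_non_empty[OF equiv_block_equiv] by (simp add: pi_part_eq)

lemma pi_subset_Phat: "B \<in> \<pi> \<Longrightarrow> B \<subseteq> Phat \<tau>"
  using in_quotient_imp_subset[OF equiv_block_equiv] by (simp add: pi_part_eq)

lemma block_of_pi: "p \<in> Phat \<tau> \<Longrightarrow> block_of \<pi> p = block_equiv `` {p}"
  unfolding pi_part_eq by (rule block_of_quotient[OF equiv_block_equiv])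

lemma pi_block_eq: "B \<in> \<pi> \<Longrightarrow> p \<in> B \<Longrightarrow> B = block_equiv `` {p}"
  using block_of_eq[OF disjoint_pi] block_of_pi pi_subset_Phat by blast

lemma pi_block_equiv: "B \<in> \<pi> \<Longrightarrow> p \<in> B \<Longrightarrow> q \<in> B \<Longrightarrow> (p, q) \<in> block_equiv"
  using pi_block_eq by blast

lemma phi_subset_pi: "\<phi> \<subseteq> \<pi>"
  unfolding pi_part_def by blast

lemma singleton_mem_pi: "c \<in> Cset \<tau> k \<Longrightarrow> {c} \<in> \<pi>"
  unfolding pi_part_def by blast

lemma phi_subset_Oset: "B \<in> \<phi> \<Longrightarrow> B \<subseteq> Oset \<tau> k"
  unfolding assoc_partition_def by blast

lemma pi_block_Cset: "B \<in> \<pi> \<Longrightarrow> c \<in> B \<Longrightarrow> c \<in> Cset \<tau> k \<Longrightarrow> B = {c}"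
  using pi_block_eq block_equiv_class_Cset by blast

lemma pi_block_Oset: "B \<in> \<pi> \<Longrightarrow> a \<in> B \<Longrightarrow> a \<in> Oset \<tau> k \<Longrightarrow> B \<in> \<phi>"
  unfolding assoc_partition_eq using pi_block_eq quotientI by metis

lemma singleton_notin_phi: "c \<in> Cset \<tau> k \<Longrightarrow> {c} \<notin> \<phi>"
  using phi_subset_Oset Cset_Oset_disjoint by blast

lemma pi_cases: "B \<in> \<pi> \<Longrightarrow> B \<in> \<phi> \<or> (\<exists>c\<in>Cset \<tau> k. B = {c})"
  unfolding pi_part_def by blast

lemma constant_on_tight_iff: "(\<forall>(a, b)\<in>tight. v a = v b) \<longleftrightarrow> (\<forall>(p, q)\<in>block_equiv. v p = v q)"
proof
  assume const: "\<forall>(a, b)\<in>tight. v a = v b"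
  have "v a = v b" if "(a, b) \<in> (tight \<union> tight\<inverse>)\<^sup>*" for a b
    by (rule eq_along_rtrancl_symcl[OF _ that]) (use const in auto)
  then show "\<forall>(p, q)\<in>block_equiv. v p = v q"
    by (auto simp: block_equiv_def)
next
  assume const: "\<forall>(p, q)\<in>block_equiv. v p = v q"
  show "\<forall>(a, b)\<in>tight. v a = v b"
  proof clarify
    fix a b assume "(a, b) \<in> tight"
    then have "(a, b) \<in> block_equiv"
      using tight_subset_block_equiv by blast
    then show "v a = v b"
      using const by auto
  qed
qed

lemma face_constant_on_blocks: "x \<in> F \<Longrightarrow> (p, q) \<in> block_equiv \<Longrightarrow> x p = x q"
  using face_constant_on_tight constant_on_tight_iff by blast

lemma generic_point_eq_imp_block_equiv:
  assumes z: "generic_point z"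
    and "a \<in> Oset \<tau> k" "b \<in> Oset \<tau> k" "ple a b" "z a = z b"
  shows "(a, b) \<in> block_equiv"
  using assms(2-5)
proof (induction a rule: wf_induct_rule[OF Oset_poset.wf_converse_strict])
  case (1 a)
  then have a: "a \<in> Oset \<tau> k" and b: "b \<in> Oset \<tau> k" and "ple a b" "z a = z b"
    by auto
  show ?case
  proof (cases "a = b")
    case True
    then show ?thesis using a by (auto simp: block_equiv_def)
  next
    case False
    then obtain c where c: "covers ple (Oset \<tau> k) a c" "ple c b"
      using Oset_poset.exists_cover_below a b \<open>ple a b\<close> by blast
    then have c_mem: "c \<in> Oset \<tau> k" and "ple a c" "a \<noteq> c"
      by (auto simp: covers_def)
    have z_PT: "z \<in> chain_order_polytope \<tau> k"
      using z face_subset by (auto simp: generic_point_def)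
    have "z a \<le> z c" "z c \<le> z b"
      using polytope_mono[OF z_PT a c_mem \<open>ple a c\<close>] polytope_mono[OF z_PT c_mem b c(2)] .
    then have "z a = z c" "z c = z b"
      using \<open>z a = z b\<close> by auto
    then have "\<not> z a < z c"
      by simp
    then have "(a, c) \<in> tight"
      using z a c_mem covers_Oset_imp_covers_Phat[OF c(1)] unfolding generic_point_def by blast
    moreover have "(c, b) \<in> block_equiv"
      using "1.IH"[of c] c_mem b c(2) \<open>z c = z b\<close> \<open>ple a c\<close> \<open>a \<noteq> c\<close> a
      by (auto simp: Oset_poset.strict_def)
    moreover have "trans block_equiv"
      using equiv_block_equiv by (simp add: equiv_def)
    ultimately show ?thesis
      using tight_subset_block_equiv by (blast dest: transD)
  qed
qed

definition level_potential :: "((nat \<times> nat) \<Rightarrow> real) \<Rightarrow> nat \<times> nat \<Rightarrow> real" where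
  "level_potential z p = (if p \<in> Cset \<tau> k then real (fst p) else real k + 1 + z p)"

lemma level_potential_strict:
  assumes z: "generic_point z"
    and "p \<in> Phat \<tau>" "q \<in> Phat \<tau>" "ple p q" "(p, q) \<notin> block_equiv"
  shows "level_potential z p < level_potential z q"
proof -
  have z_PT: "z \<in> chain_order_polytope \<tau> k"
    using z face_subset by (auto simp: generic_point_def)
  have "p \<noteq> q"
    using assms(2,5) block_equiv_refl by blast
  then have lt: "fst p < fst q"
    using assms(4) by (simp add: ple_def)
  show ?thesis
  proof (cases "p \<in> Cset \<tau> k")
    case pC: True
    then have "fst p \<le> k" by (simp add: mem_Cset)
    show ?thesis
    proof (cases "q \<in> Cset \<tau> k")
      case True
      then show ?thesis using pC lt by (simp add: level_potential_def)
    next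
      case False
      then have "q \<in> Oset \<tau> k" using assms(3) Phat_eq_Cset_Un_Oset by blast
      then have "0 \<le> z q" by (rule polytope_nonneg_Oset[OF z_PT])
      then show ?thesis using pC False \<open>fst p \<le> k\<close> by (simp add: level_potential_def)
    qed
  next
    case pnC: False
    then have pO: "p \<in> Oset \<tau> k" using assms(2) Phat_eq_Cset_Un_Oset by blast
    then have qO: "q \<in> Oset \<tau> k" using assms(3) lt by (simp add: mem_Oset_iff)
    then have qnC: "q \<notin> Cset \<tau> k" using Cset_Oset_disjoint by blast
    have "z p \<le> z q" by (rule polytope_mono[OF z_PT pO qO assms(4)])
    moreover have "z p \<noteq> z q"
      using generic_point_eq_imp_block_equiv[OF z pO qO assms(4)] assms(5) by blast
    ultimately show ?thesis using pnC qnC by (simp add: level_potential_def)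
  qed
qed

lemma compatible_pi: "compatible ple \<pi>"
proof -
  obtain z where z: "generic_point z"
    using exists_generic_point by blast
  have "z \<in> F"
    using z by (simp add: generic_point_def)
  have const: "level_potential z p = level_potential z q" if "(p, q) \<in> block_equiv" for p q
    using that face_constant_on_blocks[OF \<open>z \<in> F\<close> that] Cset_Oset_disjoint
    by (auto simp: level_potential_def block_equiv_def)
  show ?thesis
  proof (rule compatible_if_strict_potential[where g = "\<lambda>B. level_potential z (SOME p. p \<in> B)"])
    fix B B' assume "(B, B') \<in> block_rel ple \<pi>" "B \<noteq> B'"
    then obtain p q where pq: "B \<in> \<pi>" "B' \<in> \<pi>" "p \<in> B" "q \<in> B'" "ple p q"
      by (auto simp: block_rel_def)
    have "(SOME p. p \<in> B) \<in> B" "(SOME q. q \<in> B') \<in> B'"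
      using pq by (auto intro: someI)
    then have "level_potential z (SOME p. p \<in> B) = level_potential z p"
      "level_potential z (SOME q. q \<in> B') = level_potential z q"
      using pq const pi_block_equiv by blast+
    moreover have "(p, q) \<notin> block_equiv"
      using pq \<open>B \<noteq> B'\<close> pi_block_eq equiv_class_eq[OF equiv_block_equiv] by metis
    moreover have "p \<in> Phat \<tau>" "q \<in> Phat \<tau>"
      using pq pi_subset_Phat by blast+
    ultimately show "level_potential z (SOME p. p \<in> B) < level_potential z (SOME q. q \<in> B')"
      using level_potential_strict[OF z _ _ pq(5)] by simp
  qed
qed

section \<open>The quotient poset\<close>

lemma quot_le_refl: "B \<in> \<pi> \<Longrightarrow> quot_le ple \<pi> B B"
  using pi_nonempty quot_le_of_le[of B \<pi> B _ _ ple] by fastforce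

sublocale Q: finite_poset \<pi> "quot_le ple \<pi>"
proof
  show "A = B" if "A \<in> \<pi>" "B \<in> \<pi>" "quot_le ple \<pi> A B" "quot_le ple \<pi> B A" for A B
    using compatible_pi that unfolding compatible_def quot_le_def by (auto dest: antisymD)
  show "quot_le ple \<pi> A C" if "quot_le ple \<pi> A B" "quot_le ple \<pi> B C" for A B C
    using that by (rule quot_le_trans)
qed (simp_all add: finite_pi quot_le_refl)

lemma hat0_block_mem: "{hat0} \<in> \<pi>"
  using hat0_mem_Cset by (rule singleton_mem_pi)

lemma quot_le_hat0: "B \<in> \<pi> \<Longrightarrow> quot_le ple \<pi> {hat0} B"
  using pi_nonempty pi_subset_Phat hat0_ple quot_le_of_le[OF hat0_block_mem]
  by (metis ex_in_conv insertI1 subsetD)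

lemma top_block_eq: "top_block \<tau> k F = block_equiv `` {hat1 \<tau>}"
  unfolding top_block_def by (rule block_of_pi) (use hat1_mem_Oset Phat_eq_Cset_Un_Oset in blast)

lemma top_block_mem_phi: "top_block \<tau> k F \<in> \<phi>"
  unfolding top_block_eq assoc_partition_eq using hat1_mem_Oset by (rule quotientI)

lemma hat1_mem_top_block: "hat1 \<tau> \<in> top_block \<tau> k F"
  unfolding top_block_eq
  by (rule equiv_class_self[OF equiv_block_equiv]) (use hat1_mem_Oset Phat_eq_Cset_Un_Oset in blast)

lemma quot_le_top_block: "B \<in> \<pi> \<Longrightarrow> quot_le ple \<pi> B (top_block \<tau> k F)"
  using pi_nonempty pi_subset_Phat ple_hat1 hat1_mem_top_block top_block_mem_phi phi_subset_pi
    quot_le_of_le[of B \<pi> "top_block \<tau> k F" _ "hat1 \<tau>" ple]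
  by (metis ex_in_conv subsetD)

lemma quot_le_phi_upward:
  assumes "quot_le ple \<pi> A B" "A \<in> \<phi>"
  shows "B \<in> \<phi>"
proof (rule quot_le_upward_closed[OF assms])
  fix B B' assume "(B, B') \<in> block_rel ple \<pi>" "B \<in> \<phi>"
  then obtain p q where "B' \<in> \<pi>" "p \<in> B" "q \<in> B'" "ple p q"
    unfolding block_rel_def by blast
  moreover have "p \<in> Oset \<tau> k"
    using phi_subset_Oset \<open>B \<in> \<phi>\<close> \<open>p \<in> B\<close> by blast
  moreover have "q \<in> Phat \<tau>"
    using \<open>B' \<in> \<pi>\<close> \<open>q \<in> B'\<close> pi_subset_Phat by blast
  ultimately have "q \<in> Oset \<tau> k" "B' \<in> \<pi>" "q \<in> B'"
    by (auto simp: ple_def mem_Oset_iff)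
  then show "B' \<in> \<phi>"
    using pi_block_Oset by blast
qed

lemma quot_le_singleton_downward:
  assumes "quot_le ple \<pi> B {c}" "c \<in> Cset \<tau> k"
  obtains c' where "c' \<in> Cset \<tau> k" "B = {c'}" "ple c' c"
proof -
  have "B \<in> {{c'} | c'. c' \<in> Cset \<tau> k \<and> ple c' c}"
  proof (rule quot_le_downward_closed[OF assms(1)])
    show "{c} \<in> {{c'} | c'. c' \<in> Cset \<tau> k \<and> ple c' c}"
      using assms(2) by (intro CollectI exI[of _ c]) simp
  next
    fix B B' assume "(B, B') \<in> block_rel ple \<pi>" "B' \<in> {{c'} | c'. c' \<in> Cset \<tau> k \<and> ple c' c}"
    then obtain p c'' where p: "B \<in> \<pi>" "p \<in> B" "ple p c''" "c'' \<in> Cset \<tau> k" "ple c'' c"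
      by (auto simp: block_rel_def)
    then have "p \<in> Cset \<tau> k" "ple p c"
      using pi_subset_Phat ple_trans assms(2) by (auto simp: mem_Cset ple_def)
    then show "B \<in> {{c'} | c'. c' \<in> Cset \<tau> k \<and> ple c' c}"
      using pi_block_Cset p(1,2) by blast
  qed
  then show thesis using that by blast
qed

lemma quot_le_singletons_iff:
  assumes "c \<in> Cset \<tau> k" "d \<in> Cset \<tau> k"
  shows "quot_le ple \<pi> {c} {d} \<longleftrightarrow> ple c d"
proof
  show "quot_le ple \<pi> {c} {d} \<Longrightarrow> ple c d"
    using quot_le_singleton_downward[OF _ assms(2)] by blast
  show "ple c d \<Longrightarrow> quot_le ple \<pi> {c} {d}"
    using assms by (auto intro: quot_le_of_le singleton_mem_pi)
qed

lemma quot_le_singleton_phi: "c \<in> Cset \<tau> k \<Longrightarrow> A \<in> \<phi> \<Longrightarrow> quot_le ple \<pi> {c} A"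
proof -
  assume c: "c \<in> Cset \<tau> k" and A: "A \<in> \<phi>"
  then obtain a where "a \<in> A"
    using pi_nonempty phi_subset_pi by blast
  moreover have "ple c a"
    using \<open>a \<in> A\<close> A c phi_subset_Oset by (force simp: ple_def mem_Cset mem_Oset_iff)
  ultimately show ?thesis
    using c A phi_subset_pi by (auto intro: quot_le_of_le singleton_mem_pi)
qed

lemma quot_covers_singletons_iff:
  assumes c: "c \<in> Cset \<tau> k" and d: "d \<in> Cset \<tau> k"
  shows "covers (quot_le ple \<pi>) \<pi> {c} {d} \<longleftrightarrow> fst d = Suc (fst c)"
proof
  assume cov: "covers (quot_le ple \<pi>) \<pi> {c} {d}"
  then have "ple c d" "c \<noteq> d"
    using quot_le_singletons_iff[OF c d] by (auto simp: covers_def)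
  then have lt: "fst c < fst d"
    by (simp add: ple_def)
  show "fst d = Suc (fst c)"
  proof (rule ccontr)
    assume "fst d \<noteq> Suc (fst c)"
    with lt have lt': "Suc (fst c) < fst d" by simp
    define e where "e = (Suc (fst c), 1::nat)"
    have "e \<in> Phat \<tau>"
      unfolding e_def by (rule level_point_Phat) (use d lt' k_le in \<open>simp add: mem_Cset\<close>)
    then have "e \<in> Cset \<tau> k"
      using d lt' by (simp add: mem_Cset e_def)
    moreover have "ple c e" "ple e d" "{e} \<noteq> {c}" "{e} \<noteq> {d}"
      using lt' by (auto simp: e_def ple_def prod_eq_iff)
    ultimately show False
      using cov c d quot_le_singletons_iff singleton_mem_pi unfolding covers_def by blast
  qed
next
  assume lvl: "fst d = Suc (fst c)"
  have "\<not> (quot_le ple \<pi> {c} E \<and> quot_le ple \<pi> E {d} \<and> E \<noteq> {c} \<and> E \<noteq> {d})" for E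
  proof
    assume E: "quot_le ple \<pi> {c} E \<and> quot_le ple \<pi> E {d} \<and> E \<noteq> {c} \<and> E \<noteq> {d}"
    then obtain e where e: "e \<in> Cset \<tau> k" "E = {e}" "ple e d"
      using quot_le_singleton_downward[OF _ d] by metis
    then have "ple c e"
      using E quot_le_singletons_iff[OF c e(1)] by simp
    then show False
      using e E lvl by (auto simp: ple_def)
  qed
  then show "covers (quot_le ple \<pi>) \<pi> {c} {d}"
    using c d lvl quot_le_singletons_iff[OF c d] singleton_mem_pi
    by (auto simp: covers_def ple_def)
qed

lemma quot_covers_singleton_phi_level:
  assumes c: "c \<in> Cset \<tau> k" and A: "A \<in> \<phi>" and cov: "covers (quot_le ple \<pi>) \<pi> {c} A"
  shows "fst c = k"
proof (rule ccontr)
  assume "fst c \<noteq> k"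
  then have lt: "fst c < k"
    using c by (simp add: mem_Cset)
  define e where "e = (Suc (fst c), 1::nat)"
  have "e \<in> Phat \<tau>"
    unfolding e_def by (rule level_point_Phat) (use lt k_le in simp)
  then have e: "e \<in> Cset \<tau> k"
    using lt by (simp add: mem_Cset e_def)
  then have "quot_le ple \<pi> {c} {e}" "quot_le ple \<pi> {e} A" "{e} \<noteq> {c}" "{e} \<noteq> A"
    using c A quot_le_singletons_iff quot_le_singleton_phi singleton_notin_phi
    by (auto simp: e_def ple_def prod_eq_iff)
  then show False
    using cov e singleton_mem_pi unfolding covers_def by blast
qed

lemma exists_quot_cover_phi:
  assumes c: "c \<in> Cset \<tau> k" "fst c = k" and A: "A \<in> \<phi>"
  obtains A' where "A' \<in> \<phi>" "covers (quot_le ple \<pi>) \<pi> {c} A'" "quot_le ple \<pi> A' A"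
proof -
  have "quot_le ple \<pi> {c} A"
    by (rule quot_le_singleton_phi[OF c(1) A])
  moreover have "{c} \<noteq> A"
    using singleton_notin_phi[OF c(1)] A by blast
  ultimately
  obtain A' where A': "covers (quot_le ple \<pi>) \<pi> {c} A'" "quot_le ple \<pi> A' A"
    using Q.exists_cover_below c A singleton_mem_pi phi_subset_pi by blast
  have "A' \<in> \<phi>"
  proof (rule ccontr)
    assume "A' \<notin> \<phi>"
    moreover have "A' \<in> \<pi>"
      using A'(1) by (simp add: covers_def)
    ultimately obtain d where d: "d \<in> Cset \<tau> k" "A' = {d}"
      using pi_cases by blast
    then have "fst d = Suc k"
      using A'(1) quot_covers_singletons_iff[OF c(1) d(1)] c(2) by simp
    then show False
      using d(1) by (simp add: mem_Cset)
  qed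
  then show thesis
    using that A' by blast
qed

lemma phi_covers_imp_pi_covers:
  "covers (quot_le ple \<pi>) \<phi> A B \<Longrightarrow> covers (quot_le ple \<pi>) \<pi> A B"
  using quot_le_phi_upward phi_subset_pi unfolding covers_def by blast

sublocale Phi: finite_poset \<phi> "quot_le ple \<pi>"
proof
  show "finite \<phi>"
    using finite_pi phi_subset_pi by (rule finite_subset[rotated])
  show "quot_le ple \<pi> A A" if "A \<in> \<phi>" for A
    using that phi_subset_pi by (blast intro: Q.refl)
  show "quot_le ple \<pi> A C" if "quot_le ple \<pi> A B" "quot_le ple \<pi> B C" for A B C
    using that by (rule quot_le_trans)
  show "A = B" if "A \<in> \<phi>" "B \<in> \<phi>" "quot_le ple \<pi> A B" "quot_le ple \<pi> B A" for A B
    by (rule Q.antisym) (use that phi_subset_pi in blast)+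
qed

section \<open>The quotient polytope and the lifting map\<close>

lemma mem_quot_polytope_iff:
  "y \<in> quot_polytope \<tau> k F \<longleftrightarrow>
    (\<forall>B. B \<notin> \<pi> \<longrightarrow> y B = 0) \<and> y {hat0} = 0 \<and> y (top_block \<tau> k F) = 1 \<and>
    (\<forall>c\<in>Cset \<tau> k. 0 \<le> y {c}) \<and>
    (\<forall>B\<in>\<phi>. \<forall>B'\<in>\<phi>. covers (quot_le ple \<pi>) \<pi> B B' \<longrightarrow> y B \<le> y B') \<and>
    (\<forall>Bs A. set Bs \<subseteq> (\<lambda>c. {c}) ` Cset \<tau> k \<and> A \<in> \<phi> \<and>
        successively (covers (quot_le ple \<pi>) \<pi>) ({hat0} # Bs @ [A])
      \<longrightarrow> sum_list (map y Bs) \<le> y A)"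
  unfolding quot_polytope_def Let_def successively_conv_nth by simp

lemma lift_map_eq: "lift_map \<tau> k F y p = (if p \<in> Phat \<tau> then y (block_equiv `` {p}) else 0)"
  by (simp add: lift_map_def block_of_pi)

lemma linear_lift_map: "linear (lift_map \<tau> k F)"
  by (rule linearI) (simp_all add: lift_map_def fun_eq_iff)

lemma quot_polytope_mono:
  assumes y: "y \<in> quot_polytope \<tau> k F" and "A \<in> \<phi>" "B \<in> \<phi>" "quot_le ple \<pi> A B"
  shows "y A \<le> y B"
proof (rule Phi.monotone_if_monotone_on_covers[where f = y])
  show "y A' \<le> y B'" if "covers (quot_le ple \<pi>) \<phi> A' B'" for A' B'
    using that y phi_covers_imp_pi_covers[OF that]
    unfolding mem_quot_polytope_iff covers_def by blast
qed (use assms in auto)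

lemma successively_covers_level_singletons:
  assumes "\<And>i. i \<le> n \<Longrightarrow> c i \<in> Cset \<tau> k \<and> fst (c i) = i"
  shows "successively (covers (quot_le ple \<pi>) \<pi>) (map (\<lambda>i. {c i}) [0..<Suc n])"
  unfolding successively_conv_nth
  using assms quot_covers_singletons_iff by (simp del: upt_Suc)

lemma quot_polytope_level_chain:
  assumes y: "y \<in> quot_polytope \<tau> k F" and A: "A \<in> \<phi>"
    and c: "c 0 = hat0" "\<And>i. i \<le> k \<Longrightarrow> c i \<in> Cset \<tau> k \<and> fst (c i) = i"
  shows "(\<Sum>i=1..k. y {c i}) \<le> y A"
proof -
  obtain A' where A': "A' \<in> \<phi>" "covers (quot_le ple \<pi>) \<pi> {c k} A'" "quot_le ple \<pi> A' A"
    using exists_quot_cover_phi[of "c k" A] c(2)[of k] A by blast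
  define Bs where "Bs = map (\<lambda>i. {c i}) [1..<Suc k]"
  have "{hat0} # Bs @ [A'] = map (\<lambda>i. {c i}) [0..<Suc k] @ [A']"
    by (simp add: Bs_def c(1) upt_conv_Cons del: upt_Suc)
  moreover have "successively (covers (quot_le ple \<pi>) \<pi>) (map (\<lambda>i. {c i}) [0..<Suc k])"
    by (rule successively_covers_level_singletons) (use c(2) in blast)
  moreover have "last (map (\<lambda>i. {c i}) [0..<Suc k]) = {c k}"
    by simp
  ultimately have "successively (covers (quot_le ple \<pi>) \<pi>) ({hat0} # Bs @ [A'])"
    using A'(2) by (simp only: successively_append_iff) simp
  moreover have "set Bs \<subseteq> (\<lambda>c. {c}) ` Cset \<tau> k"
    using c(2) by (auto simp: Bs_def)
  ultimately have "sum_list (map y Bs) \<le> y A'"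
    using y A'(1) unfolding mem_quot_polytope_iff by blast
  also have "\<dots> \<le> y A"
    by (rule quot_polytope_mono[OF y A'(1) A A'(3)])
  also have "sum_list (map y Bs) = (\<Sum>i=1..k. y {c i})"
    by (simp add: Bs_def interv_sum_list_conv_sum_set_nat atLeastLessThanSuc_atLeastAtMost del: upt_Suc)
  finally show ?thesis .
qed

lemma lift_map_chain:
  assumes y: "y \<in> quot_polytope \<tau> k F"
    and ps: "\<forall>i\<in>{1..k}. ps i \<in> Y \<tau> i" and q: "q \<in> Y \<tau> (Suc k)"
  shows "(\<Sum>i=1..k. lift_map \<tau> k F y (ps i)) \<le> lift_map \<tau> k F y q"
proof -
  define c where "c i = (if i = 0 then hat0 else ps i)" for i
  have c_Y: "c i \<in> Y \<tau> i" if "i \<le> k" for i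
    using ps that by (cases "i = 0") (auto simp: c_def Y_def hat0_def)
  have c_fst: "fst (c i) = i" if "i \<le> k" for i
    using c_Y[OF that] by (rule fst_of_mem_Y)
  have c_C: "c i \<in> Cset \<tau> k" if "i \<le> k" for i
    using c_Y[OF that] c_fst[OF that] that k_le by (simp add: mem_Cset mem_Phat_iff)
  have q_O: "q \<in> Oset \<tau> k"
    using q fst_of_mem_Y[OF q] k_le by (simp add: mem_Oset_iff mem_Phat_iff)
  have "(\<Sum>i=1..k. lift_map \<tau> k F y (ps i)) = (\<Sum>i=1..k. y {c i})"
  proof (rule sum.cong[OF refl])
    fix i assume "i \<in> {1..k}"
    then have "ps i \<in> Cset \<tau> k" "c i = ps i"
      using c_C[of i] by (auto simp: c_def)
    then show "lift_map \<tau> k F y (ps i) = y {c i}"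
      by (simp add: lift_map_eq block_equiv_class_Cset Phat_eq_Cset_Un_Oset)
  qed
  also have "\<dots> \<le> y (block_equiv `` {q})"
  proof (rule quot_polytope_level_chain[OF y])
    show "block_equiv `` {q} \<in> \<phi>"
      unfolding assoc_partition_eq using q_O by (rule quotientI)
  qed (use c_C c_fst in \<open>simp_all add: c_def\<close>)
  also have "\<dots> = lift_map \<tau> k F y q"
    using q_O by (simp add: lift_map_eq Phat_eq_Cset_Un_Oset)
  finally show ?thesis .
qed

lemma lift_map_mem_polytope:
  assumes y: "y \<in> quot_polytope \<tau> k F"
  shows "lift_map \<tau> k F y \<in> chain_order_polytope \<tau> k"
  unfolding chain_order_polytope_def mem_Collect_eq
proof (intro conjI allI impI ballI)
  let ?x = "lift_map \<tau> k F y"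
  have y_hat0: "y {hat0} = 0" and y_top: "y (top_block \<tau> k F) = 1"
    and y_C: "\<And>c. c \<in> Cset \<tau> k \<Longrightarrow> 0 \<le> y {c}"
    using y unfolding mem_quot_polytope_iff by blast+
  show "?x p = 0" if "p \<notin> Phat \<tau>" for p
    using that by (simp add: lift_map_eq)
  show "?x hat0 = 0"
    using y_hat0 hat0_mem_Cset by (simp add: lift_map_eq block_equiv_class_Cset Phat_eq_Cset_Un_Oset)
  show "?x (hat1 \<tau>) = 1"
    using y_top hat1_mem_Oset by (simp add: lift_map_eq top_block_eq Phat_eq_Cset_Un_Oset)
  show "0 \<le> ?x p" if "p \<in> Cset \<tau> k" for p
    using that y_C by (simp add: lift_map_eq block_equiv_class_Cset Phat_eq_Cset_Un_Oset)
  show "?x a \<le> ?x b" if "a \<in> Oset \<tau> k" "b \<in> Oset \<tau> k" "covers ple (Phat \<tau>) a b" for a b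
  proof -
    have classes: "block_equiv `` {a} \<in> \<phi>" "block_equiv `` {b} \<in> \<phi>"
      using that(1,2) unfolding assoc_partition_eq by (auto intro: quotientI)
    have "a \<in> block_equiv `` {a}" "b \<in> block_equiv `` {b}"
      using that(1,2) Phat_eq_Cset_Un_Oset by (auto intro: block_equiv_refl)
    then have "quot_le ple \<pi> (block_equiv `` {a}) (block_equiv `` {b})"
      using classes phi_subset_pi that(3) by (auto intro: quot_le_of_le simp: covers_def)
    then show ?thesis
      using quot_polytope_mono[OF y classes] that(1,2) by (simp add: lift_map_eq Phat_eq_Cset_Un_Oset)
  qed
  show "(\<Sum>i=1..k. ?x (ps i)) \<le> ?x q" if "(\<forall>i\<in>{1..k}. ps i \<in> Y \<tau> i) \<and> q \<in> Y \<tau> (Suc k)" for ps q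
    using that lift_map_chain[OF y] by blast
qed

lemma lift_map_mem_face:
  assumes y: "y \<in> quot_polytope \<tau> k F"
  shows "lift_map \<tau> k F y \<in> F"
proof -
  have "lift_map \<tau> k F y a = lift_map \<tau> k F y b" if "(a, b) \<in> tight" for a b
  proof -
    have "(a, b) \<in> block_equiv"
      using that tight_subset_block_equiv by blast
    moreover from this have "a \<in> Phat \<tau>" "b \<in> Phat \<tau>"
      using equiv_block_equiv by (auto simp: equiv_def)
    ultimately show ?thesis
      using equiv_class_eq[OF equiv_block_equiv] by (simp add: lift_map_eq)
  qed
  then show ?thesis
    using lift_map_mem_polytope[OF y] by (subst face_eq) blast
qed

lemma inj_on_lift_map: "inj_on (lift_map \<tau> k F) (quot_polytope \<tau> k F)"
proof (rule inj_onI)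
  fix y y' assume y: "y \<in> quot_polytope \<tau> k F" "y' \<in> quot_polytope \<tau> k F"
    and eq: "lift_map \<tau> k F y = lift_map \<tau> k F y'"
  show "y = y'"
  proof
    fix B
    show "y B = y' B"
    proof (cases "B \<in> \<pi>")
      case True
      then obtain p where p: "p \<in> B"
        using pi_nonempty by blast
      then have "p \<in> Phat \<tau>" "B = block_equiv `` {p}"
        using True pi_subset_Phat pi_block_eq by blast+
      then show ?thesis
        using fun_cong[OF eq, of p] by (simp add: lift_map_eq)
    next
      case False
      then show ?thesis
        using y unfolding mem_quot_polytope_iff by simp
    qed
  qed
qed

lemma block_values_quot_mono:
  assumes x: "x \<in> F" and y_eq: "\<forall>B\<in>\<pi>. \<forall>p\<in>B. y B = x p"
    and AB: "quot_le ple \<pi> A B" "A \<in> \<phi>"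
  shows "y A \<le> (y B :: real)"
proof (rule quot_le_monotone[OF AB])
  fix D E assume DE: "(D, E) \<in> block_rel ple \<pi>" "D \<in> \<phi>"
  then obtain p q where pq: "D \<in> \<pi>" "E \<in> \<pi>" "p \<in> D" "q \<in> E" "ple p q"
    unfolding block_rel_def by blast
  have "E \<in> \<phi>"
    using quot_le_phi_upward[OF _ DE(2)] DE(1) by (simp add: quot_le_def r_into_trancl)
  then have "p \<in> Oset \<tau> k" "q \<in> Oset \<tau> k"
    using pq DE(2) phi_subset_Oset by blast+
  then have "x p \<le> x q"
    using polytope_mono face_subset x pq(5) by blast
  moreover have "y D = x p" "y E = x q"
    using y_eq pq by blast+
  ultimately show "E \<in> \<phi> \<and> y D \<le> y E"
    using \<open>E \<in> \<phi>\<close> by simp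
qed

lemma saturated_singleton_chain_levels:
  assumes ds: "set ds \<subseteq> Cset \<tau> k" "ds \<noteq> []" "ds ! 0 = hat0"
    and chain: "successively (\<lambda>c d. covers (quot_le ple \<pi>) \<pi> {c} {d}) ds"
    and A: "A \<in> \<phi>" and last: "covers (quot_le ple \<pi>) \<pi> {last ds} A"
  shows "length ds = Suc k" and "\<forall>i\<in>{1..k}. ds ! i \<in> Y \<tau> i"
proof -
  have "successively (\<lambda>c d. fst d = Suc (fst c)) ds"
    by (rule successively_mono[OF chain]) (use ds(1) quot_covers_singletons_iff in blast)
  then have lvl: "fst (ds ! i) = i" if "i < length ds" for i
    using successively_Suc_levels[of fst ds i] that ds(3) by (simp add: hat0_def)
  have "fst (last ds) = length ds - 1"
    using last_conv_nth[OF ds(2)] lvl[of "length ds - 1"] ds(2) by simp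
  moreover have "fst (last ds) = k"
    by (rule quot_covers_singleton_phi_level[OF _ A last]) (use ds(1) last_in_set[OF ds(2)] in blast)
  ultimately show len: "length ds = Suc k"
    using ds(2) by (cases ds) auto
  show "\<forall>i\<in>{1..k}. ds ! i \<in> Y \<tau> i"
  proof
    fix i assume "i \<in> {1..k}"
    then have "i < length ds"
      using len by simp
    then have "ds ! i \<in> Cset \<tau> k" "fst (ds ! i) = i"
      using ds(1) lvl nth_mem by blast+
    then show "ds ! i \<in> Y \<tau> i"
      by (simp add: mem_Cset mem_Phat_iff)
  qed
qed

lemma block_values_chain_ineq:
  assumes x: "x \<in> F" and y_eq: "\<forall>B\<in>\<pi>. \<forall>p\<in>B. y B = x p"
    and Bs: "set Bs \<subseteq> (\<lambda>c. {c}) ` Cset \<tau> k" and A: "A \<in> \<phi>"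
    and chain: "successively (covers (quot_le ple \<pi>) \<pi>) ({hat0} # Bs @ [A])"
  shows "sum_list (map y Bs) \<le> y A"
proof -
  define cs where "cs = map the_elem Bs"
  have Bs_eq: "Bs = map (\<lambda>c. {c}) cs"
    unfolding cs_def map_map using Bs by (intro map_idI[symmetric]) auto
  have cs_C: "set cs \<subseteq> Cset \<tau> k"
    using Bs by (auto simp: cs_def)
  define ds where "ds = hat0 # cs"
  have ds: "set ds \<subseteq> Cset \<tau> k" "ds \<noteq> []" "ds ! 0 = hat0"
    using cs_C hat0_mem_Cset by (simp_all add: ds_def)
  have "{hat0} # Bs @ [A] = map (\<lambda>c. {c}) ds @ [A]"
    by (simp add: ds_def Bs_eq)
  with chain have "successively (covers (quot_le ple \<pi>) \<pi>) (map (\<lambda>c. {c}) ds)"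
    and "covers (quot_le ple \<pi>) \<pi> (last (map (\<lambda>c. {c}) ds)) A"
    using ds(2) by (simp_all add: successively_append_iff)
  then have chain_ds: "successively (\<lambda>c d. covers (quot_le ple \<pi>) \<pi> {c} {d}) ds"
    and last_ds: "covers (quot_le ple \<pi>) \<pi> {last ds} A"
    using ds(2) by (simp_all add: successively_map last_map)
  note levels = saturated_singleton_chain_levels[OF ds chain_ds A last_ds]
  obtain a where a: "a \<in> A"
    using A phi_subset_pi pi_nonempty by blast
  then have "a \<in> Oset \<tau> k"
    using A phi_subset_Oset by blast
  have y_A: "y A = x a"
    using y_eq A a phi_subset_pi by blast
  have "sum_list (map y Bs) = sum_list (map x cs)"
  proof -
    have "y {c} = x c" if "c \<in> set cs" for c
      using y_eq singleton_mem_pi cs_C that by blast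
    then show ?thesis
      by (simp add: Bs_eq cong: map_cong)
  qed
  also have "\<dots> = (\<Sum>i<k. x (cs ! i))"
    using levels(1) by (simp add: sum_list_sum_nth ds_def atLeast0LessThan)
  also have "\<dots> = (\<Sum>i=1..k. x (ds ! i))"
    by (simp add: sum.atLeast1_atMost_eq ds_def)
  also have "\<dots> \<le> x a"
    using polytope_chain_le_Oset[OF _ levels(2) \<open>a \<in> Oset \<tau> k\<close>] x face_subset by blast
  also have "\<dots> = y A"
    using y_A by simp
  finally show ?thesis .
qed

lemma block_values_mem_quot_polytope:
  assumes x: "x \<in> F" and y_eq: "\<forall>B\<in>\<pi>. \<forall>p\<in>B. y B = x p" and y_out: "\<forall>B. B \<notin> \<pi> \<longrightarrow> y B = 0"
  shows "y \<in> quot_polytope \<tau> k F"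
  unfolding mem_quot_polytope_iff
proof (intro conjI allI impI ballI)
  have x_PT: "x \<in> chain_order_polytope \<tau> k"
    using x face_subset by blast
  show "y B = 0" if "B \<notin> \<pi>" for B
    using that y_out by blast
  show "y {hat0} = 0"
    using bspec[OF y_eq hat0_block_mem] polytope_hat0[OF x_PT] by simp
  show "y (top_block \<tau> k F) = 1"
  proof -
    have "top_block \<tau> k F \<in> \<pi>"
      using top_block_mem_phi phi_subset_pi by blast
    then have "y (top_block \<tau> k F) = x (hat1 \<tau>)"
      using y_eq hat1_mem_top_block by blast
    then show ?thesis
      using polytope_hat1[OF x_PT] by simp
  qed
  show "0 \<le> y {c}" if "c \<in> Cset \<tau> k" for c
    using bspec[OF y_eq singleton_mem_pi[OF that]] polytope_nonneg[OF x_PT that] by simp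
  show "y B \<le> y B'" if "B \<in> \<phi>" "B' \<in> \<phi>" "covers (quot_le ple \<pi>) \<pi> B B'" for B B'
  proof -
    have "quot_le ple \<pi> B B'"
      using that(3) by (simp add: covers_def)
    then show ?thesis
      by (rule block_values_quot_mono[OF x y_eq _ that(1)])
  qed
  show "sum_list (map y Bs) \<le> y A"
    if "set Bs \<subseteq> (\<lambda>c. {c}) ` Cset \<tau> k \<and> A \<in> \<phi> \<and>
      successively (covers (quot_le ple \<pi>) \<pi>) ({hat0} # Bs @ [A])" for Bs A
    using block_values_chain_ineq[OF x y_eq] that by blast
qed

lemma face_mem_lift_map_image:
  assumes x: "x \<in> F"
  shows "x \<in> lift_map \<tau> k F ` quot_polytope \<tau> k F"
proof -
  define y where "y B = (if B \<in> \<pi> then x (SOME p. p \<in> B) else 0)" for B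
  have y_eq: "\<forall>B\<in>\<pi>. \<forall>p\<in>B. y B = x p"
  proof (intro ballI)
    fix B p assume "B \<in> \<pi>" "p \<in> B"
    moreover from \<open>p \<in> B\<close> have "(SOME p. p \<in> B) \<in> B"
      by (rule someI)
    ultimately show "y B = x p"
      using face_constant_on_blocks[OF x] pi_block_equiv by (simp add: y_def)
  qed
  have "lift_map \<tau> k F y = x"
  proof
    fix p
    show "lift_map \<tau> k F y p = x p"
    proof (cases "p \<in> Phat \<tau>")
      case True
      then have "block_equiv `` {p} \<in> \<pi>" "p \<in> block_equiv `` {p}"
        unfolding pi_part_eq by (auto intro: quotientI block_equiv_refl)
      then have "y (block_equiv `` {p}) = x p"
        using y_eq by blast
      then show ?thesis
        using True by (simp add: lift_map_eq)
    next
      case False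
      then show ?thesis
        using polytope_outside[of x p] x face_subset by (auto simp: lift_map_eq)
    qed
  qed
  moreover have "y \<in> quot_polytope \<tau> k F"
    by (rule block_values_mem_quot_polytope[OF x y_eq]) (simp add: y_def)
  ultimately show ?thesis
    by blast
qed

lemma bij_lift_map: "bij_betw (lift_map \<tau> k F) (quot_polytope \<tau> k F) F"
  unfolding bij_betw_def
  using inj_on_lift_map lift_map_mem_face face_mem_lift_map_image by blast

section \<open>The dimension of the face\<close>

lemma face_direction_imp_blockwise_constant:
  assumes out: "\<forall>p. p \<notin> Phat \<tau> \<longrightarrow> v p = 0" and "v hat0 = 0" "v (hat1 \<tau>) = 0"
    and const: "\<forall>(p, q)\<in>block_equiv. v p = v q"
  shows "v \<in> blockwise_constant (\<pi> - {{hat0}, top_block \<tau> k F})"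
proof -
  let ?\<B> = "\<pi> - {{hat0}, top_block \<tau> k F}"
  have "v p = 0" if "p \<notin> \<Union>?\<B>" for p
  proof (cases "p \<in> Phat \<tau>")
    case True
    then have B: "block_equiv `` {p} \<in> \<pi>" "p \<in> block_equiv `` {p}"
      unfolding pi_part_eq by (auto intro: quotientI block_equiv_refl)
    then have "block_equiv `` {p} = {hat0} \<or> block_equiv `` {p} = top_block \<tau> k F"
      using that by blast
    then show ?thesis
    proof
      assume "block_equiv `` {p} = {hat0}"
      then show ?thesis using B(2) \<open>v hat0 = 0\<close> by simp
    next
      assume "block_equiv `` {p} = top_block \<tau> k F"
      then have "(hat1 \<tau>, p) \<in> block_equiv"
        using B(2) hat1_mem_top_block top_block_mem_phi phi_subset_pi pi_block_equiv by blast
      then show ?thesis using const \<open>v (hat1 \<tau>) = 0\<close> by fastforce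
    qed
  qed (use out in blast)
  moreover have "\<forall>B\<in>?\<B>. \<forall>p\<in>B. \<forall>q\<in>B. v p = v q"
    using const pi_block_equiv by blast
  ultimately show ?thesis
    unfolding blockwise_constant_def by blast
qed

lemma blockwise_constant_imp_face_direction:
  assumes "v \<in> blockwise_constant (\<pi> - {{hat0}, top_block \<tau> k F})"
  shows "(\<forall>p. p \<notin> Phat \<tau> \<longrightarrow> v p = 0) \<and> v hat0 = 0 \<and> v (hat1 \<tau>) = 0 \<and>
    (\<forall>(p, q)\<in>block_equiv. v p = v q)"
proof -
  let ?\<B> = "\<pi> - {{hat0}, top_block \<tau> k F}"
  have out: "\<And>p. p \<notin> \<Union>?\<B> \<Longrightarrow> v p = 0"
    and const: "\<And>B p q. B \<in> ?\<B> \<Longrightarrow> p \<in> B \<Longrightarrow> q \<in> B \<Longrightarrow> v p = v q"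
    using assms unfolding blockwise_constant_def by blast+
  have outside: "p \<notin> \<Union>?\<B>" if "p \<in> B" "B \<in> \<pi>" "B \<notin> ?\<B>" for p B
    by (rule not_mem_Union_other_blocks[OF disjoint_pi _ _ that(1)]) (use that in auto)
  have "v p = 0" if "p \<notin> Phat \<tau>" for p
    using that out pi_subset_Phat by blast
  moreover have "v hat0 = 0"
    using out outside[OF _ hat0_block_mem] by blast
  moreover have "v (hat1 \<tau>) = 0"
    using out outside[OF hat1_mem_top_block] top_block_mem_phi phi_subset_pi by blast
  moreover have "v p = v q" if "(p, q) \<in> block_equiv" for p q
  proof -
    have "p \<in> Phat \<tau>"
      using that equiv_block_equiv by (auto simp: equiv_def)
    then have B: "block_equiv `` {p} \<in> \<pi>" "p \<in> block_equiv `` {p}" "q \<in> block_equiv `` {p}"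
      unfolding pi_part_eq using that by (auto intro: quotientI block_equiv_refl)
    show ?thesis
    proof (cases "block_equiv `` {p} \<in> ?\<B>")
      case True
      then show ?thesis using const B by blast
    next
      case False
      then show ?thesis using out outside B by metis
    qed
  qed
  ultimately show ?thesis
    by blast
qed

lemma span_face_differences_blockwise:
  "span {x - y | x y. x \<in> F \<and> y \<in> F} = blockwise_constant (\<pi> - {{hat0}, top_block \<tau> k F})"
  unfolding span_face_differences_eq constant_on_tight_iff
proof (intro set_eqI iffI)
  fix v :: "nat \<times> nat \<Rightarrow> real"
  assume "v \<in> {v. (\<forall>p. p \<notin> Phat \<tau> \<longrightarrow> v p = 0) \<and> v hat0 = 0 \<and> v (hat1 \<tau>) = 0 \<and>
    (\<forall>(p, q)\<in>block_equiv. v p = v q)}"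
  then have "\<forall>p. p \<notin> Phat \<tau> \<longrightarrow> v p = 0" "v hat0 = 0" "v (hat1 \<tau>) = 0"
    "\<forall>(p, q)\<in>block_equiv. v p = v q"
    unfolding mem_Collect_eq by blast+
  then show "v \<in> blockwise_constant (\<pi> - {{hat0}, top_block \<tau> k F})"
    by (rule face_direction_imp_blockwise_constant)
next
  fix v :: "nat \<times> nat \<Rightarrow> real"
  assume "v \<in> blockwise_constant (\<pi> - {{hat0}, top_block \<tau> k F})"
  then show "v \<in> {v. (\<forall>p. p \<notin> Phat \<tau> \<longrightarrow> v p = 0) \<and> v hat0 = 0 \<and> v (hat1 \<tau>) = 0 \<and>
    (\<forall>(p, q)\<in>block_equiv. v p = v q)}"
    unfolding mem_Collect_eq by (rule blockwise_constant_imp_face_direction)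
qed

lemma hat0_block_ne_top_block: "{hat0} \<noteq> top_block \<tau> k F"
  using top_block_mem_phi singleton_notin_phi hat0_mem_Cset by metis

lemma affdim_face: "affdim F = card \<pi> - 2"
proof -
  let ?\<B> = "\<pi> - {{hat0}, top_block \<tau> k F}"
  have "affdim F = dim (span {x - y | x y. x \<in> F \<and> y \<in> F})"
    by (simp add: affdim_def dim_span)
  also have "\<dots> = card ?\<B>"
    unfolding span_face_differences_blockwise
    by (rule dim_blockwise_constant)
      (use finite_pi disjoint_pi pi_nonempty in \<open>auto simp: disjoint_def\<close>)
  also have "\<dots> = card \<pi> - 2"
  proof -
    have "{{hat0}, top_block \<tau> k F} \<subseteq> \<pi>"
      using hat0_block_mem top_block_mem_phi phi_subset_pi by blast
    then show ?thesis
      using finite_pi hat0_block_ne_top_block by (simp add: card_Diff_subset)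
  qed
  finally show ?thesis .
qed

lemma card_pi: "card \<pi> = card \<phi> + card (Cset \<tau> k)"
proof -
  have "finite \<phi>"
    using finite_subset[OF phi_subset_pi finite_pi] .
  moreover have "finite (Cset \<tau> k)"
    using finite_Phat[of \<tau>] by (simp add: Phat_eq_Cset_Un_Oset)
  moreover have "\<phi> \<inter> (\<lambda>c. {c}) ` Cset \<tau> k = {}"
    using singleton_notin_phi by blast
  moreover have "card ((\<lambda>c. {c}) ` Cset \<tau> k) = card (Cset \<tau> k)"
    by (rule card_image) (simp add: inj_on_def)
  ultimately show ?thesis
    unfolding pi_part_def by (simp add: card_Un_disjoint)
qed

lemma codimension_face:
  "int (sum_list \<tau>) - int (affdim F) = int (card (Oset \<tau> k)) - int (card \<phi>)"
proof -
  have "card (Phat \<tau>) = card (Cset \<tau> k) + card (Oset \<tau> k)"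
    using finite_Phat[of \<tau>] Cset_Oset_disjoint by (simp add: Phat_eq_Cset_Un_Oset card_Un_disjoint)
  moreover have "card {{hat0}, top_block \<tau> k F} \<le> card \<pi>"
    using hat0_block_mem top_block_mem_phi phi_subset_pi by (intro card_mono finite_pi) auto
  then have "2 \<le> card \<pi>"
    using hat0_block_ne_top_block by simp
  ultimately show ?thesis
    using affdim_face card_pi card_Phat[of \<tau>] by simp
qed

end

theorem proposition3p4:
  fixes \<tau> :: "nat list" and k :: nat and F :: "((nat \<times> nat) \<Rightarrow> real) set"
  assumes pos: "\<forall>t\<in>set \<tau>. 0 < t"
    and k: "k \<le> length \<tau>"
    and face: "F face_of chain_order_polytope \<tau> k"
    and ne: "F \<noteq> {}"
    and nonneg_not_tight: "\<forall>p\<in>Cset \<tau> k - {hat0}. \<not> (\<forall>x\<in>F. x p = 0)"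
    and chain_not_tight: "\<forall>ps q. (\<forall>i\<in>{1..k}. ps i \<in> Y \<tau> i) \<and> q \<in> Y \<tau> (Suc k) \<longrightarrow>
                              \<not> (\<forall>x\<in>F. (\<Sum>i=1..k. x (ps i)) = x q)"
  shows "compatible ple (pi_part \<tau> k F)
    \<and> {hat0} \<in> pi_part \<tau> k F
    \<and> (\<forall>B\<in>pi_part \<tau> k F. quot_le ple (pi_part \<tau> k F) {hat0} B)
    \<and> top_block \<tau> k F \<in> assoc_partition \<tau> k F
    \<and> hat1 \<tau> \<in> top_block \<tau> k F
    \<and> (\<forall>B\<in>pi_part \<tau> k F. quot_le ple (pi_part \<tau> k F) B (top_block \<tau> k F))
    \<and> linear (lift_map \<tau> k F)
    \<and> bij_betw (lift_map \<tau> k F) (quot_polytope \<tau> k F) F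
    \<and> int (sum_list \<tau>) - int (affdim F)
        = int (card (Oset \<tau> k)) - int (card (assoc_partition \<tau> k F))"
proof -
  interpret tight_order_face \<tau> k F
    using assms by unfold_locales blast+
  show ?thesis
    using compatible_pi hat0_block_mem quot_le_hat0 top_block_mem_phi hat1_mem_top_block
      quot_le_top_block linear_lift_map bij_lift_map codimension_face
    by blast
qed

end
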